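(* Let $\mathcal{F}\subset L_2([0,1])$ and let $(\mathcal{E},\mathcal{D})$ be a compression code for $\mathcal{F}$ operating at rate $r$ and distortion $\delta$, with codebook $\mathcal{C}$. Let $W_1,\dots,W_d$ be independent standard Wiener processes on $[0,1]$ and define $\mathcal{A}:L_2([0,1])\to\mathbb{R}^d$ by $\mathcal{A}(f)_i=\int_0^1 f(t)\,dW_i(t)$. For $f_o\in\mathcal{F}$ let ${\bf y}_o=\mathcal{A}(f_o)+{\bf z}$, where ${\bf z}\in\mathbb{R}^d$ (possibly depending on the Wiener processes and $f_o$) satisfies $\|{\bf z}\|_2\le\zeta$, and let $\hat f_o$ be any element of $\arg\min_{g\in\mathcal{C}}\|{\bf y}_o-\mathcal{A}(g)\|_2^2$. Then for arbitrary $\tau_1>0$ and $\tau_2\in(0,1)$, \[ \|\hat f_o-f_o\|_2\le\delta\sqrt{\frac{1+\tau_1}{1-\tau_2}}+\frac{2\zeta}{\sqrt{(1-\tau_2)d}} \] with probability exceeding \[ 1-2^{r}{\rm e}^{\frac d2(\tau_2+\log(1-\tau_2))}-{\rm e}^{-\frac d2(\tau_1-\log(1+\tau_1))}. \]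
   Context: $L_2([0,1])$ is the set of real functions on $[0,1]$ with $\|f\|_2=(\int_0^1 f(t)^2dt)^{1/2}<\infty$; the integrals are Itô integrals. A compression code for $\mathcal{F}$ at rate $r$ is a pair of maps $\mathcal{E}:\mathcal{F}\to\{1,\dots,2^r\}$, $\mathcal{D}:\{1,\dots,2^r\}\to L_2([0,1])$; its codebook is $\mathcal{C}=\{\mathcal{D}(\mathcal{E}(f)):f\in\mathcal{F}\}$ and its distortion is $\delta=\sup_{f\in\mathcal{F}}\|f-\mathcal{D}(\mathcal{E}(f))\|_2$. $\log$ is the natural logarithm. The probability is over the Wiener processes. *)

theory Defs
  imports "HOL-Probability.Probability"
begin

definition in_L2 :: "(real \<Rightarrow> real) \<Rightarrow> bool" where
  "in_L2 f \<longleftrightarrow> set_borel_measurable lborel {0..1} f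
     \<and> set_integrable lborel {0..1} (\<lambda>t. (f t)\<^sup>2)"

definition L2norm :: "(real \<Rightarrow> real) \<Rightarrow> real" where
  "L2norm f = sqrt (LINT t:{0..1}|lborel. (f t)\<^sup>2)"

definition compression_code ::
  "(real \<Rightarrow> real) set \<Rightarrow> nat \<Rightarrow> ((real \<Rightarrow> real) \<Rightarrow> nat) \<Rightarrow> (nat \<Rightarrow> (real \<Rightarrow> real)) \<Rightarrow> bool" where
  "compression_code F r E D \<longleftrightarrow>
     (\<forall>f\<in>F. E f \<in> {1..2^r}) \<and> (\<forall>k\<in>{1..2^r}. in_L2 (D k))"

definition codebook ::
  "(real \<Rightarrow> real) set \<Rightarrow> ((real \<Rightarrow> real) \<Rightarrow> nat) \<Rightarrow> (nat \<Rightarrow> (real \<Rightarrow> real)) \<Rightarrow> (real \<Rightarrow> real) set" where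
  "codebook F E D = {D (E f) | f. f \<in> F}"

definition distortion ::
  "(real \<Rightarrow> real) set \<Rightarrow> ((real \<Rightarrow> real) \<Rightarrow> nat) \<Rightarrow> (nat \<Rightarrow> (real \<Rightarrow> real)) \<Rightarrow> ereal" where
  "distortion F E D = (SUP f\<in>F. ereal (L2norm (\<lambda>t. f t - D (E f) t)))"

definition std_wiener :: "'a measure \<Rightarrow> ('a \<Rightarrow> real \<Rightarrow> real) \<Rightarrow> bool" where
  "std_wiener M X \<longleftrightarrow>
     (\<forall>t\<in>{0..1}. (\<lambda>\<omega>. X \<omega> t) \<in> borel_measurable M)
   \<and> (AE \<omega> in M. X \<omega> 0 = 0)
   \<and> (AE \<omega> in M. continuous_on {0..1} (X \<omega>))
   \<and> (\<forall>s t. 0 \<le> s \<and> s < t \<and> t \<le> 1 \<longrightarrow>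
        distributed M lborel (\<lambda>\<omega>. X \<omega> t - X \<omega> s) (\<lambda>x. ennreal (normal_density 0 (sqrt (t - s)) x)))
   \<and> (\<forall>(ts :: nat \<Rightarrow> real) n. 0 \<le> ts 0 \<and> ts n \<le> 1 \<and> (\<forall>k<n. ts k < ts (Suc k)) \<longrightarrow>
        prob_space.indep_vars M (\<lambda>_. borel) (\<lambda>k \<omega>. X \<omega> (ts (Suc k)) - X \<omega> (ts k)) {..<n})"

definition partition01 :: "nat \<Rightarrow> (nat \<Rightarrow> real) \<Rightarrow> bool" where
  "partition01 n ts \<longleftrightarrow> ts 0 = 0 \<and> ts n = 1 \<and> (\<forall>k<n. ts k < ts (Suc k))"

definition stepfun :: "nat \<Rightarrow> (nat \<Rightarrow> real) \<Rightarrow> (nat \<Rightarrow> real) \<Rightarrow> real \<Rightarrow> real" where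
  "stepfun n ts c t = (\<Sum>k<n. c k * indicator {ts k<..ts (Suc k)} t)"

definition stepint :: "('a \<Rightarrow> real \<Rightarrow> real) \<Rightarrow> nat \<Rightarrow> (nat \<Rightarrow> real) \<Rightarrow> (nat \<Rightarrow> real) \<Rightarrow> 'a \<Rightarrow> real" where
  "stepint X n ts c \<omega> = (\<Sum>k<n. c k * (X \<omega> (ts (Suc k)) - X \<omega> (ts k)))"

text \<open>Y is (a version of) the integral of f against X: the L2(M)-limit of the integrals of
  step functions converging to f in L2([0,1]).\<close>

definition wiener_integral ::
  "'a measure \<Rightarrow> ('a \<Rightarrow> real \<Rightarrow> real) \<Rightarrow> (real \<Rightarrow> real) \<Rightarrow> ('a \<Rightarrow> real) \<Rightarrow> bool" where
  "wiener_integral M X f Y \<longleftrightarrow> Y \<in> borel_measurable M \<and>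
     (\<exists>(n :: nat \<Rightarrow> nat) ts c.
        (\<forall>m. partition01 (n m) (ts m))
      \<and> (\<lambda>m. L2norm (\<lambda>t. f t - stepfun (n m) (ts m) (c m) t)) \<longlonglongrightarrow> 0
      \<and> (\<lambda>m. \<integral>\<^sup>+ \<omega>. ennreal ((Y \<omega> - stepint X (n m) (ts m) (c m) \<omega>)\<^sup>2) \<partial>M) \<longlonglongrightarrow> 0)"

end

theory Submission
  imports Defs
begin

text \<open>
  For a codeword \<open>g\<close> the coordinates of \<open>A g - A f\<^sub>o\<close> are independent centred Gaussians of
  variance \<open>\<parallel>g - f\<^sub>o\<parallel>\<^sup>2\<close>, so \<open>\<parallel>A g - A f\<^sub>o\<parallel>\<^sup>2\<close> is \<open>\<parallel>g - f\<^sub>o\<parallel>\<^sup>2\<close> times a \<open>\<chi>\<^sup>2\<close> variable with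
  \<open>d\<close> degrees of freedom, with moment generating function \<open>(1 - 2 c \<parallel>g - f\<^sub>o\<parallel>\<^sup>2) powr (-d/2)\<close>.
  This is computed exactly for step functions, whose stochastic integrals are finite combinations
  of independent Wiener increments, and survives as an upper bound in the \<open>L\<^sub>2\<close> limit by
  Fatou's lemma along an almost surely convergent subsequence.

  Chernoff bounds then show that, outside an event of the stated probability, the codeword
  \<open>g\<^sub>0 = D (E f\<^sub>o)\<close> satisfies \<open>\<parallel>A g\<^sub>0 - A f\<^sub>o\<parallel>\<^sup>2 \<le> (1 + \<tau>\<^sub>1) d \<delta>\<^sup>2\<close> while every other codeword
  satisfies \<open>\<parallel>A g - A f\<^sub>o\<parallel>\<^sup>2 \<ge> (1 - \<tau>\<^sub>2) d \<parallel>g - f\<^sub>o\<parallel>\<^sup>2\<close> (a union bound over at most \<open>2\<^sup>r\<close>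
  codewords). On that event the minimality of \<open>fhat\<close> and the triangle inequality give
  \<open>\<parallel>A fhat - A f\<^sub>o\<parallel> \<le> \<parallel>A g\<^sub>0 - A f\<^sub>o\<parallel> + 2 \<zeta>\<close>, which rearranges to the claimed bound.
\<close>

section \<open>The moment generating function of a squared Gaussian\<close>

lemma nn_integral_normal_density_exp_square:
  assumes \<sigma>: "0 < \<sigma>" and l: "2 * l * \<sigma>\<^sup>2 < 1"
  shows "(\<integral>\<^sup>+x. ennreal (normal_density 0 \<sigma> x) * ennreal (exp (l * x\<^sup>2)) \<partial>lborel)
         = ennreal (1 / sqrt (1 - 2 * l * \<sigma>\<^sup>2))"
proof -
  define q where "q = 1 - 2 * l * \<sigma>\<^sup>2"
  have q: "0 < q" using l by (simp add: q_def)
  define \<sigma>' where "\<sigma>' = \<sigma> / sqrt q"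
  have \<sigma>': "0 < \<sigma>'" using \<sigma> q by (simp add: \<sigma>'_def)
  \<comment> \<open>the factor \<open>exp (l x\<^sup>2)\<close> only rescales the variance, to \<open>\<sigma>\<^sup>2 / q\<close>\<close>
  have rescale: "normal_density 0 \<sigma> x * exp (l * x\<^sup>2) = 1 / sqrt q * normal_density 0 \<sigma>' x" for x
  proof -
    have var: "\<sigma>'\<^sup>2 = \<sigma>\<^sup>2 / q" using q by (simp add: \<sigma>'_def power_divide)
    have "- x\<^sup>2 / (2 * \<sigma>\<^sup>2) + l * x\<^sup>2 = - x\<^sup>2 / (2 * \<sigma>'\<^sup>2)"
      using \<sigma> q unfolding var q_def by (simp add: field_simps)
    then have "exp (- x\<^sup>2 / (2 * \<sigma>\<^sup>2)) * exp (l * x\<^sup>2) = exp (- x\<^sup>2 / (2 * \<sigma>'\<^sup>2))"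
      by (simp add: mult_exp_exp)
    moreover have "1 / sqrt (2 * pi * \<sigma>\<^sup>2) = 1 / sqrt q * (1 / sqrt (2 * pi * \<sigma>'\<^sup>2))"
      using \<sigma> q unfolding var by (simp add: real_sqrt_divide real_sqrt_mult)
    ultimately show ?thesis
      unfolding normal_density_def by (simp add: mult.assoc)
  qed
  have "(\<integral>\<^sup>+x. ennreal (normal_density 0 \<sigma> x) * ennreal (exp (l * x\<^sup>2)) \<partial>lborel)
      = (\<integral>\<^sup>+x. ennreal (1 / sqrt q) * ennreal (normal_density 0 \<sigma>' x) \<partial>lborel)"
    using q by (intro nn_integral_cong) (simp add: rescale flip: ennreal_mult)
  also have "\<dots> = ennreal (1 / sqrt q) * (\<integral>\<^sup>+x. ennreal (normal_density 0 \<sigma>' x) \<partial>lborel)"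
    by (rule nn_integral_cmult) simp
  also have "(\<integral>\<^sup>+x. ennreal (normal_density 0 \<sigma>' x) \<partial>lborel) = 1"
    using \<sigma>' by (subst nn_integral_eq_integral) (auto intro: integrable_normal_density)
  finally show ?thesis by (simp add: q_def)
qed

lemma (in prob_space) nn_integral_exp_square_normal:
  assumes "distributed M lborel X (normal_density 0 \<sigma>)" and "0 < \<sigma>" and "2 * l * \<sigma>\<^sup>2 < 1"
  shows "(\<integral>\<^sup>+\<omega>. ennreal (exp (l * (X \<omega>)\<^sup>2)) \<partial>M) = ennreal (1 / sqrt (1 - 2 * l * \<sigma>\<^sup>2))"
  using distributed_nn_integral[OF assms(1), of "\<lambda>x. ennreal (exp (l * x\<^sup>2))"]
    nn_integral_normal_density_exp_square[OF assms(2,3)] by simp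

definition sq_integrable :: "'a measure \<Rightarrow> ('a \<Rightarrow> real) \<Rightarrow> bool" where
  "sq_integrable M f \<longleftrightarrow> f \<in> borel_measurable M \<and> integrable M (\<lambda>x. (f x)\<^sup>2)"

definition norm2 :: "'a measure \<Rightarrow> ('a \<Rightarrow> real) \<Rightarrow> real" where
  "norm2 M f = sqrt (\<integral>x. (f x)\<^sup>2 \<partial>M)"

lemma sq_integrable_imp_integrable_mult:
  assumes "sq_integrable M g" "sq_integrable M h"
  shows "integrable M (\<lambda>x. g x * h x)"
proof (rule Bochner_Integration.integrable_bound[where f="\<lambda>x. (g x)\<^sup>2 + (h x)\<^sup>2"])
  show "integrable M (\<lambda>x. (g x)\<^sup>2 + (h x)\<^sup>2)" "(\<lambda>x. g x * h x) \<in> borel_measurable M"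
    using assms unfolding sq_integrable_def by auto
  have "\<bar>g x * h x\<bar> \<le> (g x)\<^sup>2 + (h x)\<^sup>2" for x
  proof -
    have "2 * (\<bar>g x\<bar> * \<bar>h x\<bar>) \<le> (g x)\<^sup>2 + (h x)\<^sup>2"
      using sum_squares_bound[of "\<bar>g x\<bar>" "\<bar>h x\<bar>"] by (simp add: mult.assoc)
    moreover have "0 \<le> \<bar>g x\<bar> * \<bar>h x\<bar>" by simp
    ultimately show ?thesis unfolding abs_mult by linarith
  qed
  then show "AE x in M. norm (g x * h x) \<le> norm ((g x)\<^sup>2 + (h x)\<^sup>2)" by simp
qed

lemma power2_sum_fun: "(\<lambda>x. (g x + h x)\<^sup>2) = (\<lambda>x. (g x)\<^sup>2 + 2 * (g x * h x) + (h x)\<^sup>2 :: real)"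
  by (simp add: fun_eq_iff power2_sum algebra_simps)

lemma sq_integrable_add: "sq_integrable M g \<Longrightarrow> sq_integrable M h \<Longrightarrow> sq_integrable M (\<lambda>x. g x + h x)"
  using sq_integrable_imp_integrable_mult[of M g h]
  by (auto simp: sq_integrable_def power2_sum_fun)

lemma sq_integrable_diff: "sq_integrable M g \<Longrightarrow> sq_integrable M h \<Longrightarrow> sq_integrable M (\<lambda>x. g x - h x)"
  using sq_integrable_add[of M g "\<lambda>x. - h x"] by (simp add: sq_integrable_def)

lemma norm2_nonneg: "0 \<le> norm2 M f"
  unfolding norm2_def by simp

lemma norm2_minus_commute: "norm2 M (\<lambda>x. g x - h x) = norm2 M (\<lambda>x. h x - g x)"
  unfolding norm2_def by (simp add: power2_commute)

lemma integral_mult_le_norm2: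
  assumes g: "sq_integrable M g" and h: "sq_integrable M h"
  shows "(\<integral>x. g x * h x \<partial>M) \<le> norm2 M g * norm2 M h"
proof -
  have [measurable]: "g \<in> borel_measurable M" "h \<in> borel_measurable M"
    and sq: "integrable M (\<lambda>x. (g x)\<^sup>2)" "integrable M (\<lambda>x. (h x)\<^sup>2)"
    using g h unfolding sq_integrable_def by auto
  have gh: "integrable M (\<lambda>x. \<bar>g x\<bar> * \<bar>h x\<bar>)"
    using sq_integrable_imp_integrable_mult[OF g h] by (simp flip: abs_mult)
  have nn_sq: "(\<integral>\<^sup>+x. ennreal \<bar>f x\<bar> ^ 2 \<partial>M) = ennreal (\<integral>x. (f x)\<^sup>2 \<partial>M)"
    if "integrable M (\<lambda>x. (f x)\<^sup>2)" for f
    using that by (simp add: ennreal_power nn_integral_eq_integral)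
  have "ennreal (\<integral>x. \<bar>g x\<bar> * \<bar>h x\<bar> \<partial>M) ^ 2
      = (\<integral>\<^sup>+x. ennreal \<bar>g x\<bar> * ennreal \<bar>h x\<bar> \<partial>M)\<^sup>2"
    using gh by (simp add: nn_integral_eq_integral flip: ennreal_mult)
  also have "\<dots> \<le> (\<integral>\<^sup>+x. ennreal \<bar>g x\<bar> ^ 2 \<partial>M) * (\<integral>\<^sup>+x. ennreal \<bar>h x\<bar> ^ 2 \<partial>M)"
    by (rule Cauchy_Schwarz_nn_integral) measurable
  also have "\<dots> = ennreal ((\<integral>x. (g x)\<^sup>2 \<partial>M) * (\<integral>x. (h x)\<^sup>2 \<partial>M))"
    using sq by (simp add: nn_sq ennreal_mult)
  finally have "(\<integral>x. \<bar>g x\<bar> * \<bar>h x\<bar> \<partial>M)\<^sup>2 \<le> (\<integral>x. (g x)\<^sup>2 \<partial>M) * (\<integral>x. (h x)\<^sup>2 \<partial>M)"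
    by (simp add: ennreal_power integral_nonneg_AE ennreal_le_iff)
  then have "(\<integral>x. \<bar>g x\<bar> * \<bar>h x\<bar> \<partial>M) \<le> norm2 M g * norm2 M h"
    unfolding norm2_def by (simp add: real_le_rsqrt flip: real_sqrt_mult)
  moreover have "(\<integral>x. g x * h x \<partial>M) \<le> (\<integral>x. \<bar>g x\<bar> * \<bar>h x\<bar> \<partial>M)"
    using sq_integrable_imp_integrable_mult[OF g h] gh by (intro integral_mono) (auto simp flip: abs_mult)
  ultimately show ?thesis by linarith
qed

lemma norm2_triangle:
  assumes g: "sq_integrable M g" and h: "sq_integrable M h"
  shows "norm2 M (\<lambda>x. g x + h x) \<le> norm2 M g + norm2 M h"
proof -
  have "(\<integral>x. (g x + h x)\<^sup>2 \<partial>M) = (\<integral>x. (g x)\<^sup>2 \<partial>M) + 2 * (\<integral>x. g x * h x \<partial>M) + (\<integral>x. (h x)\<^sup>2 \<partial>M)"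
    using g h sq_integrable_imp_integrable_mult[OF g h]
    by (auto simp: sq_integrable_def power2_sum_fun)
  also have "\<dots> \<le> (norm2 M g + norm2 M h)\<^sup>2"
    using integral_mult_le_norm2[OF g h] by (simp add: norm2_def power2_sum)
  finally show ?thesis
    unfolding norm2_def[of M "\<lambda>x. g x + h x"]
    using norm2_nonneg[of M g] norm2_nonneg[of M h] by (simp add: real_sqrt_le_iff real_le_lsqrt)
qed

lemma norm2_diff_triangle:
  assumes "sq_integrable M f" "sq_integrable M g" "sq_integrable M h"
  shows "norm2 M (\<lambda>x. f x - h x) \<le> norm2 M (\<lambda>x. f x - g x) + norm2 M (\<lambda>x. g x - h x)"
  using norm2_triangle[OF sq_integrable_diff[OF assms(1,2)] sq_integrable_diff[OF assms(2,3)]] by simp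

lemma in_L2_iff_sq_integrable: "in_L2 f \<longleftrightarrow> sq_integrable (restrict_space lborel {0..1}) f"
  unfolding in_L2_def sq_integrable_def set_borel_measurable_def
  by (simp add: borel_measurable_restrict_space_iff set_integrable_eq)

lemma L2norm_eq_norm2: "L2norm f = norm2 (restrict_space lborel {0..1}) f"
  unfolding L2norm_def norm2_def set_lebesgue_integral_def by (simp add: integral_restrict_space)

lemma L2norm_nonneg: "0 \<le> L2norm f"
  unfolding L2norm_eq_norm2 by (rule norm2_nonneg)

lemma L2norm_minus_commute: "L2norm (\<lambda>t. g t - h t) = L2norm (\<lambda>t. h t - g t)"
  unfolding L2norm_eq_norm2 by (rule norm2_minus_commute)

lemma L2norm_diff_lipschitz:
  assumes "in_L2 p" "in_L2 q" "in_L2 g" "in_L2 f"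
  shows "\<bar>L2norm (\<lambda>t. p t - q t) - L2norm (\<lambda>t. g t - f t)\<bar>
           \<le> L2norm (\<lambda>t. g t - p t) + L2norm (\<lambda>t. f t - q t)"
proof -
  let ?M = "restrict_space lborel {0..1}"
  have p: "sq_integrable ?M p" and q: "sq_integrable ?M q"
    and g: "sq_integrable ?M g" and f: "sq_integrable ?M f"
    using assms by (simp_all add: in_L2_iff_sq_integrable)
  show ?thesis
    unfolding L2norm_eq_norm2
    using norm2_diff_triangle[OF p g q] norm2_diff_triangle[OF g f q]
      norm2_diff_triangle[OF g p f] norm2_diff_triangle[OF p q f]
      norm2_minus_commute[of ?M g p] norm2_minus_commute[of ?M q f]
    by linarith
qed

lemma L2norm_diff_tendsto:
  assumes "\<And>m. in_L2 (p m)" "\<And>m. in_L2 (q m)" "in_L2 g" "in_L2 f"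
    and "(\<lambda>m. L2norm (\<lambda>t. g t - p m t)) \<longlonglongrightarrow> 0" "(\<lambda>m. L2norm (\<lambda>t. f t - q m t)) \<longlonglongrightarrow> 0"
  shows "(\<lambda>m. L2norm (\<lambda>t. p m t - q m t)) \<longlonglongrightarrow> L2norm (\<lambda>t. g t - f t)"
proof -
  have "(\<lambda>m. L2norm (\<lambda>t. p m t - q m t) - L2norm (\<lambda>t. g t - f t)) \<longlonglongrightarrow> 0"
  proof (rule Lim_null_comparison)
    show "\<forall>\<^sub>F m in sequentially. norm (L2norm (\<lambda>t. p m t - q m t) - L2norm (\<lambda>t. g t - f t))
        \<le> L2norm (\<lambda>t. g t - p m t) + L2norm (\<lambda>t. f t - q m t)"
      using assms(1-4) by (simp add: L2norm_diff_lipschitz)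
    show "(\<lambda>m. L2norm (\<lambda>t. g t - p m t) + L2norm (\<lambda>t. f t - q m t)) \<longlonglongrightarrow> 0"
      using tendsto_add[OF assms(5,6)] by simp
  qed
  then show ?thesis by (simp add: LIM_zero_iff)
qed

lemma partition_strict_mono:
  assumes "partition01 n ts" "i < j" "j \<le> n"
  shows "ts i < ts j"
  using assms(2,3)
proof (induction j)
  case (Suc j)
  have "ts j < ts (Suc j)" using assms(1) Suc.prems unfolding partition01_def by auto
  with Suc show ?case by (cases "i = j") auto
qed simp

lemma partition_less_iff:
  assumes "partition01 n ts" "i \<le> n" "j \<le> n"
  shows "ts i < ts j \<longleftrightarrow> i < j"
  using partition_strict_mono[OF assms(1)] assms(2,3)
  by (metis less_asym linorder_neqE_nat order_less_irrefl)

lemma partition_le_iff: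
  assumes "partition01 n ts" "i \<le> n" "j \<le> n"
  shows "ts i \<le> ts j \<longleftrightarrow> i \<le> j"
  using partition_less_iff[OF assms(1) assms(3) assms(2)] by (simp add: not_less[symmetric])

lemma partition_bounds:
  assumes "partition01 n ts" "k \<le> n"
  shows "0 \<le> ts k" "ts k \<le> 1"
  using partition_le_iff[OF assms(1), of 0 k] partition_le_iff[OF assms(1), of k n] assms
  unfolding partition01_def by auto

lemma partition_cell_subset:
  assumes "partition01 n ts" "k < n"
  shows "{ts k<..ts (Suc k)} \<subseteq> {0<..1}"
  using partition_bounds[OF assms(1), of k] partition_bounds[OF assms(1), of "Suc k"] assms(2)
  by auto

lemma partition_cell_exists:
  assumes u: "partition01 N u" and t: "t \<in> {0<..1}"
  shows "\<exists>j<N. t \<in> {u j<..u (Suc j)}"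
proof -
  have "\<exists>j<m. t \<in> {u j<..u (Suc j)}" if "m \<le> N" "t \<le> u m" for m
    using that
  proof (induction m)
    case 0
    then show ?case using u t unfolding partition01_def by simp
  next
    case (Suc m)
    then show ?case by (cases "t \<le> u m") (auto intro: less_SucI)
  qed
  then show ?thesis using u t unfolding partition01_def by auto
qed

lemma partition_cell_position:
  assumes u: "partition01 N u" and j: "j < N" "t \<in> {u j<..u (Suc j)}" and a: "a \<le> N"
  shows "u a < t \<longleftrightarrow> a \<le> j" and "t \<le> u a \<longleftrightarrow> j < a"
proof -
  have "u a < t \<and> \<not> t \<le> u a" if "a \<le> j"
    using partition_le_iff[OF u, of a j] that j a by auto
  moreover have "\<not> u a < t \<and> t \<le> u a" if "j < a"
    using partition_le_iff[OF u, of "Suc j" a] that j a by auto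
  ultimately show "u a < t \<longleftrightarrow> a \<le> j" "t \<le> u a \<longleftrightarrow> j < a" by (meson not_less)+
qed

lemma sum_partition_cells_eq:
  assumes u: "partition01 N u" and j: "j < N" "t \<in> {u j<..u (Suc j)}"
  shows "(\<Sum>i<N. f i * indicator {u i<..u (Suc i)} t) = (f j :: real)"
proof -
  have "t \<notin> {u i<..u (Suc i)}" if "i < N" "i \<noteq> j" for i
    using partition_cell_position[OF u j, of i] partition_cell_position[OF u j, of "Suc i"] that
    by auto
  then have rest: "(\<Sum>i\<in>{..<N} - {j}. f i * indicator {u i<..u (Suc i)} t) = 0"
    by (intro sum.neutral) simp
  have "(\<Sum>i<N. f i * indicator {u i<..u (Suc i)} t)
      = f j * indicator {u j<..u (Suc j)} t + (\<Sum>i\<in>{..<N} - {j}. f i * indicator {u i<..u (Suc i)} t)"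
    using j by (intro sum.remove) auto
  then show ?thesis using j(2) by (simp only: rest) simp
qed

lemma sum_partition_cells_outside:
  assumes "partition01 N u" "t \<notin> {0<..1}"
  shows "(\<Sum>i<N. f i * indicator {u i<..u (Suc i)} t) = (0 :: real)"
proof -
  have "t \<notin> {u i<..u (Suc i)}" if "i < N" for i
    using partition_cell_subset[OF assms(1) that] assms(2) by blast
  then show ?thesis by (intro sum.neutral) simp
qed

lemma sum_partition_cells_square:
  assumes u: "partition01 N u"
  shows "(\<Sum>i<N. f i * indicator {u i<..u (Suc i)} t)\<^sup>2
       = (\<Sum>i<N. (f i)\<^sup>2 * indicator {u i<..u (Suc i)} t :: real)"
proof (cases "t \<in> {0<..1}")
  case True
  then obtain j where "j < N" "t \<in> {u j<..u (Suc j)}" using partition_cell_exists[OF u] by blast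
  then show ?thesis using sum_partition_cells_eq[OF u] by simp
next
  case False
  then show ?thesis
    using sum_partition_cells_outside[OF u False, of f]
      sum_partition_cells_outside[OF u False, of "\<lambda>i. (f i)\<^sup>2"] by simp
qed

definition refines :: "nat \<Rightarrow> (nat \<Rightarrow> real) \<Rightarrow> nat \<Rightarrow> (nat \<Rightarrow> real) \<Rightarrow> bool" where
  "refines N u n ts \<longleftrightarrow> (\<forall>k\<le>n. \<exists>a\<le>N. ts k = u a)"

lemma common_refinement:
  assumes ts: "partition01 n ts" and ts': "partition01 n' ts'"
  obtains N u where "partition01 N u" "refines N u n ts" "refines N u n' ts'"
proof -
  define U where "U = ts ` {..n} \<union> ts' ` {..n'}"
  have fin: "finite U" unfolding U_def by simp
  have U01: "x \<in> U \<Longrightarrow> 0 \<le> x \<and> x \<le> 1" for x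
    unfolding U_def using partition_bounds[OF ts] partition_bounds[OF ts'] by auto
  have U0: "0 \<in> U" and U1: "1 \<in> U" using ts unfolding U_def partition01_def by force+
  define xs where "xs = sorted_list_of_set U"
  have xs: "sorted_wrt (<) xs" "set xs = U" "length xs = card U"
    using fin unfolding xs_def by simp_all
  have "card {0, 1::real} \<le> card U" using U0 U1 by (intro card_mono fin) auto
  then have card: "2 \<le> card U" by simp
  define N where "N = length xs - 1"
  define u where "u = (\<lambda>j. xs ! j)"
  have lenN: "length xs = Suc N" using xs(3) card unfolding N_def by simp
  have lt: "i < j \<Longrightarrow> j \<le> N \<Longrightarrow> u i < u j" for i j
    unfolding u_def using sorted_wrt_nth_less[OF xs(1)] lenN by simp
  have inU: "j \<le> N \<Longrightarrow> u j \<in> U" for j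
    using xs(2) lenN unfolding u_def by (metis le_imp_less_Suc nth_mem)
  have onto: "x \<in> U \<Longrightarrow> \<exists>a\<le>N. x = u a" for x
    using xs(2) lenN unfolding u_def by (metis in_set_conv_nth less_Suc_eq_le)
  have "u 0 = 0"
  proof -
    obtain a where "a \<le> N" "u a = 0" using onto[OF U0] by auto
    then show ?thesis using lt[of 0 a] U01[OF inU[of 0]] by (cases "a = 0") auto
  qed
  moreover have "u N = 1"
  proof -
    obtain a where "a \<le> N" "u a = 1" using onto[OF U1] by auto
    then show ?thesis using lt[of a N] U01[OF inU[of N]] by (cases "a = N") auto
  qed
  ultimately have "partition01 N u" unfolding partition01_def using lt by auto
  moreover have "refines N u n ts" "refines N u n' ts'"
    unfolding refines_def using onto U_def by auto
  ultimately show ?thesis using that by blast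
qed

lemma indicator_refined_cell:
  assumes u: "partition01 N u" and "a < b" "b \<le> N" "j < N"
  shows "indicator {u a<..u b} (u (Suc j)) = (if a \<le> j \<and> j < b then 1 else 0 :: real)"
  using partition_less_iff[OF u, of a "Suc j"] partition_le_iff[OF u, of "Suc j" b] assms
  by (auto simp: indicator_def)

text \<open>Both a step function and its stochastic integral are sums over the cells of an additive
  interval function \<open>\<Phi>\<close>; on a refinement each coarse cell splits into the fine cells it contains.\<close>

lemma sum_over_refinement:
  assumes u: "partition01 N u" and ts: "partition01 n ts" and r: "refines N u n ts"
    and \<Phi>: "\<And>a b. a < b \<Longrightarrow> b \<le> N \<Longrightarrow> \<Phi> (u a) (u b) = (\<Sum>j<N. indicator {u a<..u b} (u (Suc j)) * \<phi> j)"
  shows "(\<Sum>k<n. c k * \<Phi> (ts k) (ts (Suc k))) = (\<Sum>j<N. stepfun n ts c (u (Suc j)) * \<phi> j)"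
proof -
  have summand: "c k * \<Phi> (ts k) (ts (Suc k))
      = (\<Sum>j<N. c k * indicator {ts k<..ts (Suc k)} (u (Suc j)) * \<phi> j)"
    if k: "k < n" for k
  proof -
    obtain a b where a: "a \<le> N" "ts k = u a" and b: "b \<le> N" "ts (Suc k) = u b"
      using r k unfolding refines_def by (metis Suc_leI less_imp_le_nat)
    have "a < b"
      using partition_less_iff[OF u a(1) b(1)] a b ts k unfolding partition01_def by auto
    then show ?thesis unfolding a(2) b(2) by (simp only: \<Phi> b(1) sum_distrib_left mult.assoc)
  qed
  have "(\<Sum>k<n. c k * \<Phi> (ts k) (ts (Suc k)))
      = (\<Sum>k<n. \<Sum>j<N. c k * indicator {ts k<..ts (Suc k)} (u (Suc j)) * \<phi> j)"
    by (rule sum.cong[OF refl]) (rule summand, simp)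
  also have "\<dots> = (\<Sum>j<N. \<Sum>k<n. c k * indicator {ts k<..ts (Suc k)} (u (Suc j)) * \<phi> j)"
    by (rule sum.swap)
  finally show ?thesis by (simp only: stepfun_def sum_distrib_right)
qed

lemma stepfun_refine:
  assumes u: "partition01 N u" and "partition01 n ts" "refines N u n ts"
  shows "stepfun n ts c t = (\<Sum>j<N. stepfun n ts c (u (Suc j)) * indicator {u j<..u (Suc j)} t)"
  unfolding stepfun_def[of n ts c t]
proof (rule sum_over_refinement[OF assms])
  fix a b assume ab: "a < b" "b \<le> N"
  show "indicator {u a<..u b} t
      = (\<Sum>j<N. indicator {u a<..u b} (u (Suc j)) * indicator {u j<..u (Suc j)} t :: real)"
  proof (cases "t \<in> {0<..1}")
    case True
    then obtain j where j: "j < N" "t \<in> {u j<..u (Suc j)}"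
      using partition_cell_exists[OF u] by blast
    have "indicator {u a<..u b} t = (if a \<le> j \<and> j < b then 1 else 0 :: real)"
      using partition_cell_position[OF u j, of a] partition_cell_position[OF u j, of b] ab
      by (auto simp: indicator_def)
    also have "\<dots> = (\<Sum>j<N. indicator {u a<..u b} (u (Suc j)) * indicator {u j<..u (Suc j)} t)"
      by (simp only: sum_partition_cells_eq[OF u j] indicator_refined_cell[OF u ab j(1)])
    finally show ?thesis .
  next
    case False
    then have "t \<notin> {u a<..u b}"
      using partition_bounds[OF u, of a] partition_bounds[OF u, of b] ab by auto
    then show ?thesis by (simp only: sum_partition_cells_outside[OF u False]) simp
  qed
qed

lemma stepint_refine:
  assumes u: "partition01 N u" and "partition01 n ts" "refines N u n ts"
  shows "stepint X n ts c \<omega> = (\<Sum>j<N. stepfun n ts c (u (Suc j)) * (X \<omega> (u (Suc j)) - X \<omega> (u j)))"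
  unfolding stepint_def
proof (rule sum_over_refinement[OF assms])
  fix a b assume ab: "a < b" "b \<le> N"
  have "(\<Sum>j<N. indicator {u a<..u b} (u (Suc j)) * (X \<omega> (u (Suc j)) - X \<omega> (u j)))
      = (\<Sum>j<N. if j \<in> {a..<b} then X \<omega> (u (Suc j)) - X \<omega> (u j) else 0)"
    by (intro sum.cong refl) (simp add: indicator_refined_cell[OF u ab])
  also have "\<dots> = (\<Sum>j\<in>{..<N} \<inter> {a..<b}. X \<omega> (u (Suc j)) - X \<omega> (u j))"
    by (rule sum.inter_restrict[symmetric]) simp
  also have "{..<N} \<inter> {a..<b} = {a..<b}" using ab by auto
  also have "(\<Sum>j\<in>{a..<b}. X \<omega> (u (Suc j)) - X \<omega> (u j)) = X \<omega> (u b) - X \<omega> (u a)"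
    using ab by (intro sum_Suc_diff') simp
  finally show "X \<omega> (u b) - X \<omega> (u a)
      = (\<Sum>j<N. indicator {u a<..u b} (u (Suc j)) * (X \<omega> (u (Suc j)) - X \<omega> (u j)))" ..
qed

lemma indicator_01_partition_step_square:
  assumes u: "partition01 N u"
  shows "indicator {0..1} t *\<^sub>R (\<Sum>i<N. f i * indicator {u i<..u (Suc i)} t)\<^sup>2
       = (\<Sum>i<N. (f i)\<^sup>2 * indicator {u i<..u (Suc i)} t :: real)"
proof (cases "t \<in> {0..1}")
  case False
  then have "t \<notin> {0<..1}" by auto
  with False show ?thesis by (simp only: sum_partition_cells_outside[OF u \<open>t \<notin> {0<..1}\<close>]) simp
qed (simp only: sum_partition_cells_square[OF u], simp)

lemma integrable_partition_step:
  assumes "partition01 N u"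
  shows "integrable lborel (\<lambda>t. \<Sum>i<N. a i * indicator {u i<..u (Suc i)} t :: real)"
  using assms unfolding partition01_def
  by (intro Bochner_Integration.integrable_sum integrable_mult_right)
    (auto simp: integrable_indicator_iff less_imp_le)

lemma in_L2_partition_step:
  assumes u: "partition01 N u"
  shows "in_L2 (\<lambda>t. \<Sum>i<N. f i * indicator {u i<..u (Suc i)} t)"
  unfolding in_L2_def set_borel_measurable_def set_integrable_def
    indicator_01_partition_step_square[OF u]
  using integrable_partition_step[OF u] by simp

lemma L2norm_partition_step:
  assumes u: "partition01 N u"
  shows "L2norm (\<lambda>t. \<Sum>i<N. f i * indicator {u i<..u (Suc i)} t)
       = sqrt (\<Sum>i<N. (f i)\<^sup>2 * (u (Suc i) - u i))"
proof -
  have lt: "u i < u (Suc i)" if "i < N" for i using u that unfolding partition01_def by auto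
  have "(\<integral>t. (\<Sum>i<N. (f i)\<^sup>2 * indicator {u i<..u (Suc i)} t) \<partial>lborel)
      = (\<Sum>i<N. \<integral>t. (f i)\<^sup>2 * indicator {u i<..u (Suc i)} t \<partial>lborel)"
    using lt by (intro Bochner_Integration.integral_sum) (auto simp: integrable_indicator_iff less_imp_le)
  also have "\<dots> = (\<Sum>i<N. (f i)\<^sup>2 * (u (Suc i) - u i))"
    using lt by (intro sum.cong refl) (simp add: less_imp_le)
  finally have "(\<integral>t. (\<Sum>i<N. (f i)\<^sup>2 * indicator {u i<..u (Suc i)} t) \<partial>lborel)
      = (\<Sum>i<N. (f i)\<^sup>2 * (u (Suc i) - u i))" .
  then show ?thesis
    unfolding L2norm_def set_lebesgue_integral_def indicator_01_partition_step_square[OF u] by simp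
qed

lemma stepfun_in_L2: "partition01 n ts \<Longrightarrow> in_L2 (stepfun n ts c)"
  using in_L2_partition_step[of n ts c] unfolding stepfun_def[abs_def] .

lemma stepfun_diff_refine:
  fixes c c' :: "nat \<Rightarrow> real"
  assumes u: "partition01 N u" and ts: "partition01 n ts" "refines N u n ts"
    and ts': "partition01 n' ts'" "refines N u n' ts'"
  defines "e \<equiv> \<lambda>j. stepfun n ts c (u (Suc j)) - stepfun n' ts' c' (u (Suc j))"
  shows "stepint X n ts c \<omega> - stepint X n' ts' c' \<omega> = (\<Sum>j<N. e j * (X \<omega> (u (Suc j)) - X \<omega> (u j)))"
    and "(\<lambda>t. stepfun n ts c t - stepfun n' ts' c' t) = (\<lambda>t. \<Sum>j<N. e j * indicator {u j<..u (Suc j)} t)"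
proof -
  show "stepint X n ts c \<omega> - stepint X n' ts' c' \<omega> = (\<Sum>j<N. e j * (X \<omega> (u (Suc j)) - X \<omega> (u j)))"
    unfolding stepint_refine[OF u ts] stepint_refine[OF u ts'] e_def
    by (simp only: sum_subtractf[symmetric] left_diff_distrib)
  show "(\<lambda>t. stepfun n ts c t - stepfun n' ts' c' t) = (\<lambda>t. \<Sum>j<N. e j * indicator {u j<..u (Suc j)} t)"
  proof
    fix t
    show "stepfun n ts c t - stepfun n' ts' c' t = (\<Sum>j<N. e j * indicator {u j<..u (Suc j)} t)"
      unfolding stepfun_refine[OF u ts, of c t] stepfun_refine[OF u ts', of c' t] e_def
      by (simp only: sum_subtractf[symmetric] left_diff_distrib)
  qed
qed

section \<open>Stochastic integrals of step functions\<close>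

lemma (in prob_space) nn_integral_exp_square_indep_normal_sum:
  assumes J: "finite J" and ind: "indep_vars (\<lambda>_. borel) Z J"
    and Z: "\<And>j. j \<in> J \<Longrightarrow> distributed M lborel (Z j) (normal_density 0 (\<sigma> j))"
    and \<sigma>: "\<And>j. j \<in> J \<Longrightarrow> 0 < \<sigma> j"
    and l: "2 * l * (\<Sum>j\<in>J. (e j * \<sigma> j)\<^sup>2) < 1"
  shows "(\<integral>\<^sup>+\<omega>. ennreal (exp (l * (\<Sum>j\<in>J. e j * Z j \<omega>)\<^sup>2)) \<partial>M)
       = ennreal (1 / sqrt (1 - 2 * l * (\<Sum>j\<in>J. (e j * \<sigma> j)\<^sup>2)))"
proof -
  \<comment> \<open>only the terms with a nonzero coefficient are genuinely Gaussian\<close>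
  define K where "K = {j\<in>J. e j \<noteq> 0}"
  have K: "finite K" "K \<subseteq> J" using J unfolding K_def by auto
  have sum_K: "(\<Sum>j\<in>J. e j * Z j \<omega>) = (\<Sum>j\<in>K. e j * Z j \<omega>)" for \<omega>
    unfolding K_def using J by (intro sum.mono_neutral_right) auto
  have "(\<Sum>j\<in>J. (e j * \<sigma> j)\<^sup>2) = (\<Sum>j\<in>K. (e j * \<sigma> j)\<^sup>2)"
    unfolding K_def using J by (intro sum.mono_neutral_right) auto
  then have var_K: "(\<Sum>j\<in>J. (e j * \<sigma> j)\<^sup>2) = (\<Sum>j\<in>K. (\<bar>e j\<bar> * \<sigma> j)\<^sup>2)"
    by (simp add: power_mult_distrib)
  show ?thesis
  proof (cases "K = {}")
    case True
    then show ?thesis unfolding sum_K var_K by (simp add: emeasure_space_1)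
  next
    case False
    define v where "v = (\<Sum>j\<in>K. (\<bar>e j\<bar> * \<sigma> j)\<^sup>2)"
    have "indep_vars (\<lambda>_. borel) (\<lambda>j \<omega>. e j * Z j \<omega>) K"
      using indep_vars_subset[OF ind K(2)] by (rule indep_vars_compose2) simp
    moreover have "distributed M lborel (\<lambda>\<omega>. e j * Z j \<omega>) (normal_density 0 (\<bar>e j\<bar> * \<sigma> j))"
      if "j \<in> K" for j
    proof -
      have "j \<in> J" "e j \<noteq> 0" using that unfolding K_def by auto
      then show ?thesis using normal_density_affine[OF Z \<sigma>, of j "e j" 0] by simp
    qed
    moreover have pos: "0 < \<bar>e j\<bar> * \<sigma> j" if "j \<in> K" for j
      using that by (simp add: K_def \<sigma>)
    ultimately have "distributed M lborel (\<lambda>\<omega>. \<Sum>j\<in>K. e j * Z j \<omega>) (normal_density 0 (sqrt v))"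
      using sum_indep_normal[OF K(1) False, of "\<lambda>j \<omega>. e j * Z j \<omega>" "\<lambda>j. \<bar>e j\<bar> * \<sigma> j" "\<lambda>_. 0"]
      unfolding v_def by simp
    moreover have "0 < v"
      unfolding v_def using pos by (intro sum_pos K(1) False) (metis zero_less_power)
    ultimately have "(\<integral>\<^sup>+\<omega>. ennreal (exp (l * (\<Sum>j\<in>K. e j * Z j \<omega>)\<^sup>2)) \<partial>M)
        = ennreal (1 / sqrt (1 - 2 * l * (sqrt v)\<^sup>2))"
      using l unfolding var_K v_def[symmetric] by (intro nn_integral_exp_square_normal) auto
    with \<open>0 < v\<close> show ?thesis unfolding sum_K var_K v_def[symmetric] by simp
  qed
qed

lemma (in prob_space) nn_integral_exp_square_stepint_diff:
  assumes W: "std_wiener M X" and ts: "partition01 n ts" and ts': "partition01 n' ts'"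
    and l: "2 * l * (L2norm (\<lambda>t. stepfun n ts c t - stepfun n' ts' c' t))\<^sup>2 < 1"
  shows "(\<integral>\<^sup>+\<omega>. ennreal (exp (l * (stepint X n ts c \<omega> - stepint X n' ts' c' \<omega>)\<^sup>2)) \<partial>M)
       = ennreal (1 / sqrt (1 - 2 * l * (L2norm (\<lambda>t. stepfun n ts c t - stepfun n' ts' c' t))\<^sup>2))"
proof -
  obtain N u where u: "partition01 N u" "refines N u n ts" "refines N u n' ts'"
    using common_refinement[OF ts ts'] by blast
  define e where "e = (\<lambda>j. stepfun n ts c (u (Suc j)) - stepfun n' ts' c' (u (Suc j)))"
  define Z where "Z = (\<lambda>j \<omega>. X \<omega> (u (Suc j)) - X \<omega> (u j))"
  define \<sigma> where "\<sigma> = (\<lambda>j. sqrt (u (Suc j) - u j))"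
  have lt: "u j < u (Suc j)" if "j < N" for j using u(1) that unfolding partition01_def by auto
  have "(\<Sum>j<N. (e j)\<^sup>2 * (u (Suc j) - u j)) = (\<Sum>j<N. (e j * \<sigma> j)\<^sup>2)"
    using lt by (intro sum.cong) (simp_all add: \<sigma>_def power_mult_distrib less_imp_le)
  moreover have "0 \<le> (\<Sum>j<N. (e j)\<^sup>2 * (u (Suc j) - u j))"
    using lt by (intro sum_nonneg) (simp add: less_imp_le)
  ultimately have var: "(L2norm (\<lambda>t. stepfun n ts c t - stepfun n' ts' c' t))\<^sup>2 = (\<Sum>j<N. (e j * \<sigma> j)\<^sup>2)"
    unfolding stepfun_diff_refine(2)[OF u(1) ts u(2) ts' u(3)] L2norm_partition_step[OF u(1)]
    by (simp add: e_def)
  have ind: "indep_vars (\<lambda>_. borel) Z {..<N}"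
    using W u(1) unfolding std_wiener_def partition01_def Z_def by auto
  have dist: "distributed M lborel (Z j) (normal_density 0 (\<sigma> j))" if "j \<in> {..<N}" for j
  proof -
    have "0 \<le> u j" "u j < u (Suc j)" "u (Suc j) \<le> 1"
      using partition_bounds[OF u(1), of j] partition_bounds[OF u(1), of "Suc j"] lt that by auto
    then show ?thesis using W unfolding std_wiener_def Z_def \<sigma>_def by blast
  qed
  have pos: "0 < \<sigma> j" if "j \<in> {..<N}" for j using lt that unfolding \<sigma>_def by simp
  have mgf: "(\<integral>\<^sup>+\<omega>. ennreal (exp (l * (\<Sum>j<N. e j * Z j \<omega>)\<^sup>2)) \<partial>M)
      = ennreal (1 / sqrt (1 - 2 * l * (\<Sum>j<N. (e j * \<sigma> j)\<^sup>2)))"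
    by (rule nn_integral_exp_square_indep_normal_sum[OF finite_lessThan ind dist pos l[unfolded var]])
  have "stepint X n ts c \<omega> - stepint X n' ts' c' \<omega> = (\<Sum>j<N. e j * Z j \<omega>)" for \<omega>
    unfolding e_def Z_def by (rule stepfun_diff_refine(1)[OF u(1) ts u(2) ts' u(3)])
  then show ?thesis unfolding var by (simp only: mgf)
qed

lemma stepint_measurable:
  assumes X: "\<And>t. t \<in> {0..1} \<Longrightarrow> (\<lambda>\<omega>. X \<omega> t) \<in> borel_measurable M" and ts: "partition01 n ts"
  shows "stepint X n ts c \<in> borel_measurable M"
  unfolding stepint_def
proof (intro borel_measurable_sum borel_measurable_times borel_measurable_diff borel_measurable_const)
  fix k assume "k \<in> {..<n}"
  then show "(\<lambda>\<omega>. X \<omega> (ts (Suc k))) \<in> borel_measurable M" "(\<lambda>\<omega>. X \<omega> (ts k)) \<in> borel_measurable M"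
    using X partition_bounds[OF ts, of k] partition_bounds[OF ts, of "Suc k"] by auto
qed

lemma stepint_restrict:
  assumes "partition01 n ts"
  shows "stepint (\<lambda>w. w) n ts c (restrict (X \<omega>) {0..1}) = stepint X n ts c \<omega>"
  unfolding stepint_def using partition_bounds[OF assms] by (intro sum.cong) auto

lemma (in prob_space) nn_integral_exp_sum_square_stepint_diff:
  fixes W :: "'d::finite \<Rightarrow> 'a \<Rightarrow> real \<Rightarrow> real" and c c' :: "'d \<Rightarrow> nat \<Rightarrow> real"
  assumes W: "\<And>i. std_wiener M (W i)"
    and ind: "indep_vars (\<lambda>_. Pi\<^sub>M {0..1} (\<lambda>_. borel)) (\<lambda>i \<omega>. restrict (W i \<omega>) {0..1}) UNIV"
    and ts: "\<And>i. partition01 (n i) (ts i)" and ts': "\<And>i. partition01 (n' i) (ts' i)"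
  defines "\<sigma> \<equiv> \<lambda>i. L2norm (\<lambda>t. stepfun (n i) (ts i) (c i) t - stepfun (n' i) (ts' i) (c' i) t)"
  assumes l: "\<And>i. 2 * l * (\<sigma> i)\<^sup>2 < 1"
  shows "(\<integral>\<^sup>+\<omega>. ennreal (exp (l * (\<Sum>i\<in>UNIV.
            (stepint (W i) (n i) (ts i) (c i) \<omega> - stepint (W i) (n' i) (ts' i) (c' i) \<omega>)\<^sup>2))) \<partial>M)
       = ennreal (\<Prod>i\<in>UNIV. 1 / sqrt (1 - 2 * l * (\<sigma> i)\<^sup>2))"
proof -
  define S where "S = (\<lambda>i \<omega>. stepint (W i) (n i) (ts i) (c i) \<omega> - stepint (W i) (n' i) (ts' i) (c' i) \<omega>)"
  \<comment> \<open>each summand is a function of the path of \<open>W i\<close> on \<open>[0,1]\<close>, so the summands are independent\<close>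
  define Y where "Y = (\<lambda>i w. ennreal (exp (l * (stepint (\<lambda>w. w) (n i) (ts i) (c i) w
                                               - stepint (\<lambda>w. w) (n' i) (ts' i) (c' i) w)\<^sup>2)))"
  have "Y i \<in> borel_measurable (Pi\<^sub>M {0..1} (\<lambda>_. borel))" for i
    using stepint_measurable[OF _ ts, of "\<lambda>w. w"] stepint_measurable[OF _ ts', of "\<lambda>w. w"]
    unfolding Y_def by (simp add: measurable_component_singleton)
  then have "indep_vars (\<lambda>_. borel) (\<lambda>i \<omega>. Y i (restrict (W i \<omega>) {0..1})) UNIV"
    by (intro indep_vars_compose2[OF ind])
  moreover have "Y i (restrict (W i \<omega>) {0..1}) = ennreal (exp (l * (S i \<omega>)\<^sup>2))" for i \<omega>
    unfolding Y_def S_def by (simp add: stepint_restrict[OF ts] stepint_restrict[OF ts'])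
  ultimately have indY: "indep_vars (\<lambda>_. borel) (\<lambda>i \<omega>. ennreal (exp (l * (S i \<omega>)\<^sup>2))) UNIV"
    by simp
  have "(\<integral>\<^sup>+\<omega>. ennreal (exp (l * (\<Sum>i\<in>UNIV. (S i \<omega>)\<^sup>2))) \<partial>M)
      = (\<integral>\<^sup>+\<omega>. (\<Prod>i\<in>UNIV. ennreal (exp (l * (S i \<omega>)\<^sup>2))) \<partial>M)"
    by (intro nn_integral_cong) (simp add: sum_distrib_left exp_sum prod_ennreal)
  also have "\<dots> = (\<Prod>i\<in>UNIV. \<integral>\<^sup>+\<omega>. ennreal (exp (l * (S i \<omega>)\<^sup>2)) \<partial>M)"
    using indY by (intro indep_vars_nn_integral) auto
  also have "\<dots> = (\<Prod>i\<in>UNIV. ennreal (1 / sqrt (1 - 2 * l * (\<sigma> i)\<^sup>2)))"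
    unfolding S_def \<sigma>_def
    by (intro prod.cong refl nn_integral_exp_square_stepint_diff W ts ts' l[unfolded \<sigma>_def])
  also have "\<dots> = ennreal (\<Prod>i\<in>UNIV. 1 / sqrt (1 - 2 * l * (\<sigma> i)\<^sup>2))"
    using l by (intro prod_ennreal) (simp add: less_imp_le)
  finally show ?thesis unfolding S_def .
qed

section \<open>Passing to Wiener integrals\<close>

lemma AE_tendsto_zero_subseq:
  fixes h :: "nat \<Rightarrow> 'a \<Rightarrow> real"
  assumes meas: "\<And>m. h m \<in> borel_measurable M" and nonneg: "\<And>m \<omega>. 0 \<le> h m \<omega>"
    and lim: "(\<lambda>m. \<integral>\<^sup>+\<omega>. ennreal (h m \<omega>) \<partial>M) \<longlonglongrightarrow> 0"
  obtains r where "filterlim r sequentially sequentially" "AE \<omega> in M. (\<lambda>k. h (r k) \<omega>) \<longlonglongrightarrow> 0"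
proof -
  \<comment> \<open>pick \<open>r k\<close> with \<open>\<integral>\<^sup>+ h (r k) \<le> 2^-k\<close>; then \<open>\<Sum>k. h (r k) \<omega>\<close> has finite integral\<close>
  have "\<forall>k. \<exists>m. \<forall>m'\<ge>m. (\<integral>\<^sup>+\<omega>. ennreal (h m' \<omega>) \<partial>M) < ennreal ((1/2)^k)"
    using order_tendstoD(2)[OF lim] by (simp add: eventually_sequentially)
  then obtain N where N: "\<And>k m. m \<ge> N k \<Longrightarrow> (\<integral>\<^sup>+\<omega>. ennreal (h m \<omega>) \<partial>M) < ennreal ((1/2)^k)"
    by metis
  define r where "r = (\<lambda>k. N k + k)"
  have r: "filterlim r sequentially sequentially"
    unfolding filterlim_at_top eventually_sequentially r_def by (metis le_add2 order_trans)
  have "(\<integral>\<^sup>+\<omega>. (\<Sum>k. ennreal (h (r k) \<omega>)) \<partial>M) = (\<Sum>k. \<integral>\<^sup>+\<omega>. ennreal (h (r k) \<omega>) \<partial>M)"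
    using meas by (intro nn_integral_suminf) auto
  also have "\<dots> \<le> (\<Sum>k. ennreal ((1/2)^k))"
    using N unfolding r_def by (intro suminf_le) (auto intro: less_imp_le)
  also have "\<dots> = ennreal (\<Sum>k. (1/2)^k)"
    by (intro suminf_ennreal2) (auto simp: summable_geometric)
  finally have "(\<integral>\<^sup>+\<omega>. (\<Sum>k. ennreal (h (r k) \<omega>)) \<partial>M) \<noteq> \<infinity>"
    by (auto simp: top_unique)
  then have "AE \<omega> in M. (\<Sum>k. ennreal (h (r k) \<omega>)) \<noteq> \<infinity>"
    using meas by (intro nn_integral_PInf_AE) auto
  then have "AE \<omega> in M. (\<lambda>k. h (r k) \<omega>) \<longlonglongrightarrow> 0"
  proof eventually_elim
    case (elim \<omega>)
    then have "summable (\<lambda>k. h (r k) \<omega>)" using nonneg by (intro summable_suminf_not_top) auto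
    then show ?case by (rule summable_LIMSEQ_zero)
  qed
  with r show ?thesis using that by blast
qed

lemma nn_integral_exp_le_of_AE_tendsto:
  assumes meas: "\<And>k. Q k \<in> borel_measurable M"
    and lim: "AE \<omega> in M. (\<lambda>k. Q k \<omega>) \<longlonglongrightarrow> Q' \<omega>"
    and mgf: "eventually (\<lambda>k. (\<integral>\<^sup>+\<omega>. ennreal (exp (l * Q k \<omega>)) \<partial>M) = ennreal (a k)) sequentially"
    and a: "a \<longlonglongrightarrow> a'"
  shows "(\<integral>\<^sup>+\<omega>. ennreal (exp (l * Q' \<omega>)) \<partial>M) \<le> ennreal a'"
proof -
  have "(\<integral>\<^sup>+\<omega>. ennreal (exp (l * Q' \<omega>)) \<partial>M) = (\<integral>\<^sup>+\<omega>. liminf (\<lambda>k. ennreal (exp (l * Q k \<omega>))) \<partial>M)"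
    using lim by (intro nn_integral_cong_AE) (auto elim!: AE_mp intro!: lim_imp_Liminf[symmetric] tendsto_intros)
  also have "\<dots> \<le> liminf (\<lambda>k. \<integral>\<^sup>+\<omega>. ennreal (exp (l * Q k \<omega>)) \<partial>M)"
    using meas by (intro nn_integral_liminf) simp
  also have "\<dots> = liminf (\<lambda>k. ennreal (a k))"
    using mgf by (rule Liminf_eq)
  also have "\<dots> = ennreal a'"
    using a by (intro lim_imp_Liminf tendsto_intros) simp
  finally show ?thesis .
qed

lemma nn_integral_sum_square_error_tendsto_zero:
  fixes Yg Yf :: "'i \<Rightarrow> 'a \<Rightarrow> real" and Sg Sf :: "'i \<Rightarrow> nat \<Rightarrow> 'a \<Rightarrow> real"
  assumes I: "finite I"
    and meas: "\<And>i. Yg i \<in> borel_measurable M" "\<And>i. Yf i \<in> borel_measurable M"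
      "\<And>i m. Sg i m \<in> borel_measurable M" "\<And>i m. Sf i m \<in> borel_measurable M"
    and g: "\<And>i. (\<lambda>m. \<integral>\<^sup>+\<omega>. ennreal ((Yg i \<omega> - Sg i m \<omega>)\<^sup>2) \<partial>M) \<longlonglongrightarrow> 0"
    and f: "\<And>i. (\<lambda>m. \<integral>\<^sup>+\<omega>. ennreal ((Yf i \<omega> - Sf i m \<omega>)\<^sup>2) \<partial>M) \<longlonglongrightarrow> 0"
  shows "(\<lambda>m. \<integral>\<^sup>+\<omega>. ennreal (\<Sum>i\<in>I. ((Yg i \<omega> - Yf i \<omega>) - (Sg i m \<omega> - Sf i m \<omega>))\<^sup>2) \<partial>M)
           \<longlonglongrightarrow> 0"
proof (rule tendsto_sandwich[OF _ _ tendsto_const])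
  define B where "B = (\<lambda>m. \<Sum>i\<in>I. 2 * (\<integral>\<^sup>+\<omega>. ennreal ((Yg i \<omega> - Sg i m \<omega>)\<^sup>2) \<partial>M)
                                 + 2 * (\<integral>\<^sup>+\<omega>. ennreal ((Yf i \<omega> - Sf i m \<omega>)\<^sup>2) \<partial>M))"
  have "(\<integral>\<^sup>+\<omega>. ennreal (\<Sum>i\<in>I. ((Yg i \<omega> - Yf i \<omega>) - (Sg i m \<omega> - Sf i m \<omega>))\<^sup>2) \<partial>M) \<le> B m" for m
  proof -
    have pointwise: "ennreal (((Yg i \<omega> - Yf i \<omega>) - (Sg i m \<omega> - Sf i m \<omega>))\<^sup>2)
        \<le> 2 * ennreal ((Yg i \<omega> - Sg i m \<omega>)\<^sup>2) + 2 * ennreal ((Yf i \<omega> - Sf i m \<omega>)\<^sup>2)"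
      for i \<omega>
    proof -
      have "((Yg i \<omega> - Yf i \<omega>) - (Sg i m \<omega> - Sf i m \<omega>))\<^sup>2
          \<le> 2 * (Yg i \<omega> - Sg i m \<omega>)\<^sup>2 + 2 * (Yf i \<omega> - Sf i m \<omega>)\<^sup>2"
        using sum_squares_bound[of "Yg i \<omega> - Sg i m \<omega>" "- (Yf i \<omega> - Sf i m \<omega>)"]
        by (simp add: power2_eq_square algebra_simps)
      then have "ennreal (((Yg i \<omega> - Yf i \<omega>) - (Sg i m \<omega> - Sf i m \<omega>))\<^sup>2)
          \<le> ennreal (2 * (Yg i \<omega> - Sg i m \<omega>)\<^sup>2 + 2 * (Yf i \<omega> - Sf i m \<omega>)\<^sup>2)"
        by (rule ennreal_leI)
      then show ?thesis by (simp add: ennreal_plus ennreal_mult)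
    qed
    have "ennreal (\<Sum>i\<in>I. ((Yg i \<omega> - Yf i \<omega>) - (Sg i m \<omega> - Sf i m \<omega>))\<^sup>2)
        = (\<Sum>i\<in>I. ennreal (((Yg i \<omega> - Yf i \<omega>) - (Sg i m \<omega> - Sf i m \<omega>))\<^sup>2))" for \<omega>
      by simp
    then have "ennreal (\<Sum>i\<in>I. ((Yg i \<omega> - Yf i \<omega>) - (Sg i m \<omega> - Sf i m \<omega>))\<^sup>2)
        \<le> (\<Sum>i\<in>I. 2 * ennreal ((Yg i \<omega> - Sg i m \<omega>)\<^sup>2) + 2 * ennreal ((Yf i \<omega> - Sf i m \<omega>)\<^sup>2))"
      for \<omega>
      using pointwise by (simp only:) (rule sum_mono)
    then have "(\<integral>\<^sup>+\<omega>. ennreal (\<Sum>i\<in>I. ((Yg i \<omega> - Yf i \<omega>) - (Sg i m \<omega> - Sf i m \<omega>))\<^sup>2) \<partial>M)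
        \<le> (\<integral>\<^sup>+\<omega>. (\<Sum>i\<in>I. 2 * ennreal ((Yg i \<omega> - Sg i m \<omega>)\<^sup>2) + 2 * ennreal ((Yf i \<omega> - Sf i m \<omega>)\<^sup>2)) \<partial>M)"
      by (intro nn_integral_mono)
    also have "\<dots> = B m"
      unfolding B_def using I meas by (simp add: nn_integral_sum nn_integral_add nn_integral_cmult)
    finally show ?thesis .
  qed
  then show "\<forall>\<^sub>F m in sequentially. (\<integral>\<^sup>+\<omega>. ennreal (\<Sum>i\<in>I. ((Yg i \<omega> - Yf i \<omega>) - (Sg i m \<omega> - Sf i m \<omega>))\<^sup>2) \<partial>M) \<le> B m"
    by simp
  have "B \<longlonglongrightarrow> (\<Sum>i\<in>I. 2 * 0 + 2 * 0)"
    unfolding B_def by (intro tendsto_sum tendsto_add ennreal_tendsto_cmult g f) simp_all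
  then show "B \<longlonglongrightarrow> 0" by simp
qed simp

lemma wiener_integral_choice:
  assumes "\<And>i. wiener_integral M (X i) f (Y i)"
  obtains n ts c where "\<And>i. Y i \<in> borel_measurable M" "\<And>i m. partition01 (n i m) (ts i m)"
    "\<And>i. (\<lambda>m. L2norm (\<lambda>t. f t - stepfun (n i m) (ts i m) (c i m) t)) \<longlonglongrightarrow> 0"
    "\<And>i. (\<lambda>m. \<integral>\<^sup>+\<omega>. ennreal ((Y i \<omega> - stepint (X i) (n i m) (ts i m) (c i m) \<omega>)\<^sup>2) \<partial>M) \<longlonglongrightarrow> 0"
proof -
  define P where "P = (\<lambda>i n ts c. (\<forall>m. partition01 (n m) (ts m))
      \<and> (\<lambda>m. L2norm (\<lambda>t. f t - stepfun (n m) (ts m) (c m) t)) \<longlonglongrightarrow> 0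
      \<and> (\<lambda>m. \<integral>\<^sup>+\<omega>. ennreal ((Y i \<omega> - stepint (X i) (n m) (ts m) (c m) \<omega>)\<^sup>2) \<partial>M) \<longlonglongrightarrow> 0)"
  have "\<forall>i. \<exists>n ts c. P i n ts c" using assms unfolding wiener_integral_def P_def by blast
  then obtain n ts c where "\<And>i. P i (n i) (ts i) (c i)" by metis
  then show ?thesis using assms that unfolding P_def wiener_integral_def by blast
qed

lemma tendsto_sum_power2_of_sum_power2_diff:
  fixes X :: "'i \<Rightarrow> nat \<Rightarrow> real"
  assumes I: "finite I" and lim: "(\<lambda>k. \<Sum>i\<in>I. (Y i - X i k)\<^sup>2) \<longlonglongrightarrow> 0"
  shows "(\<lambda>k. \<Sum>i\<in>I. (X i k)\<^sup>2) \<longlonglongrightarrow> (\<Sum>i\<in>I. (Y i)\<^sup>2)"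
proof (intro tendsto_sum tendsto_power)
  fix i assume i: "i \<in> I"
  have bound: "norm (X i k - Y i) \<le> sqrt (\<Sum>i\<in>I. (Y i - X i k)\<^sup>2)" for k
  proof -
    have "sqrt ((Y i - X i k)\<^sup>2) \<le> sqrt (\<Sum>i\<in>I. (Y i - X i k)\<^sup>2)"
      using I i by (intro real_sqrt_le_mono member_le_sum) auto
    then show ?thesis by (simp add: abs_minus_commute)
  qed
  have "(\<lambda>k. sqrt (\<Sum>i\<in>I. (Y i - X i k)\<^sup>2)) \<longlonglongrightarrow> 0"
    using tendsto_real_sqrt[OF lim] by simp
  then have "(\<lambda>k. X i k - Y i) \<longlonglongrightarrow> 0"
    by (rule Lim_null_comparison[OF always_eventually, rotated]) (use bound in blast)
  then show "(\<lambda>k. X i k) \<longlonglongrightarrow> Y i" by (simp add: LIM_zero_iff)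
qed

text \<open>Fatou's lemma along an almost surely convergent subsequence of step approximations: only an
  upper bound on the moment generating function survives the limit.\<close>

lemma (in prob_space) nn_integral_exp_sum_square_wiener_diff_le:
  fixes W :: "'d::finite \<Rightarrow> 'a \<Rightarrow> real \<Rightarrow> real" and Yg Yf :: "'d \<Rightarrow> 'a \<Rightarrow> real"
  assumes W: "\<And>i. std_wiener M (W i)"
    and ind: "indep_vars (\<lambda>_. Pi\<^sub>M {0..1} (\<lambda>_. borel)) (\<lambda>i \<omega>. restrict (W i \<omega>) {0..1}) UNIV"
    and Yg: "\<And>i. wiener_integral M (W i) g (Yg i)" and Yf: "\<And>i. wiener_integral M (W i) f (Yf i)"
    and g: "in_L2 g" and f: "in_L2 f"
    and l: "2 * l * (L2norm (\<lambda>t. g t - f t))\<^sup>2 < 1"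
  shows "(\<integral>\<^sup>+\<omega>. ennreal (exp (l * (\<Sum>i\<in>UNIV. (Yg i \<omega> - Yf i \<omega>)\<^sup>2))) \<partial>M)
       \<le> ennreal ((1 / sqrt (1 - 2 * l * (L2norm (\<lambda>t. g t - f t))\<^sup>2)) ^ CARD('d))"
proof -
  define s where "s = L2norm (\<lambda>t. g t - f t)"
  obtain ng tsg cg where G: "\<And>i. Yg i \<in> borel_measurable M" "\<And>i m. partition01 (ng i m) (tsg i m)"
      "\<And>i. (\<lambda>m. L2norm (\<lambda>t. g t - stepfun (ng i m) (tsg i m) (cg i m) t)) \<longlonglongrightarrow> 0"
      "\<And>i. (\<lambda>m. \<integral>\<^sup>+ \<omega>. ennreal ((Yg i \<omega> - stepint (W i) (ng i m) (tsg i m) (cg i m) \<omega>)\<^sup>2) \<partial>M) \<longlonglongrightarrow> 0"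
    using wiener_integral_choice[of M W g Yg, OF Yg] by blast
  obtain nf tsf cf where F: "\<And>i. Yf i \<in> borel_measurable M" "\<And>i m. partition01 (nf i m) (tsf i m)"
      "\<And>i. (\<lambda>m. L2norm (\<lambda>t. f t - stepfun (nf i m) (tsf i m) (cf i m) t)) \<longlonglongrightarrow> 0"
      "\<And>i. (\<lambda>m. \<integral>\<^sup>+ \<omega>. ennreal ((Yf i \<omega> - stepint (W i) (nf i m) (tsf i m) (cf i m) \<omega>)\<^sup>2) \<partial>M) \<longlonglongrightarrow> 0"
    using wiener_integral_choice[of M W f Yf, OF Yf] by blast
  define Sg where "Sg = (\<lambda>i m. stepint (W i) (ng i m) (tsg i m) (cg i m))"
  define Sf where "Sf = (\<lambda>i m. stepint (W i) (nf i m) (tsf i m) (cf i m))"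
  define \<sigma> where "\<sigma> = (\<lambda>i m. L2norm (\<lambda>t. stepfun (ng i m) (tsg i m) (cg i m) t
                                       - stepfun (nf i m) (tsf i m) (cf i m) t))"
  define Q where "Q = (\<lambda>m \<omega>. \<Sum>i\<in>UNIV. (Sg i m \<omega> - Sf i m \<omega>)\<^sup>2)"
  define E where "E = (\<lambda>m \<omega>. \<Sum>i\<in>UNIV. ((Yg i \<omega> - Yf i \<omega>) - (Sg i m \<omega> - Sf i m \<omega>))\<^sup>2)"
  have W_eval: "(\<lambda>\<omega>. W i \<omega> t) \<in> borel_measurable M" if "t \<in> {0..1}" for i t
    using W that unfolding std_wiener_def by blast
  have Sg_meas: "Sg i m \<in> borel_measurable M" and Sf_meas: "Sf i m \<in> borel_measurable M" for i m
    unfolding Sg_def Sf_def using stepint_measurable[OF W_eval G(2)] stepint_measurable[OF W_eval F(2)]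
    by auto
  have Q_meas: "Q m \<in> borel_measurable M" for m unfolding Q_def using Sg_meas Sf_meas by measurable
  have E_meas: "E m \<in> borel_measurable M" for m
    unfolding E_def using Sg_meas Sf_meas G(1) F(1) by measurable
  have \<sigma>_lim: "(\<lambda>m. \<sigma> i m) \<longlonglongrightarrow> s" for i
    unfolding \<sigma>_def s_def using stepfun_in_L2[OF G(2)] stepfun_in_L2[OF F(2)] g f G(3) F(3)
    by (rule L2norm_diff_tendsto)
  have "(\<lambda>m. \<integral>\<^sup>+\<omega>. ennreal (E m \<omega>) \<partial>M) \<longlonglongrightarrow> 0"
    unfolding E_def Sg_def Sf_def
    using G(1,4) F(1,4) Sg_meas Sf_meas unfolding Sg_def Sf_def
    by (intro nn_integral_sum_square_error_tendsto_zero) auto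
  moreover have "0 \<le> E m \<omega>" for m \<omega> unfolding E_def by (simp add: sum_nonneg)
  ultimately obtain r where r: "filterlim r sequentially sequentially"
    and E_lim: "AE \<omega> in M. (\<lambda>k. E (r k) \<omega>) \<longlonglongrightarrow> 0"
    using AE_tendsto_zero_subseq[of E M, OF E_meas] by blast
  have "AE \<omega> in M. (\<lambda>k. Q (r k) \<omega>) \<longlonglongrightarrow> (\<Sum>i\<in>UNIV. (Yg i \<omega> - Yf i \<omega>)\<^sup>2)"
    using E_lim unfolding E_def Q_def
    by eventually_elim (rule tendsto_sum_power2_of_sum_power2_diff, simp_all)
  moreover have "\<forall>\<^sub>F k in sequentially. (\<integral>\<^sup>+\<omega>. ennreal (exp (l * Q (r k) \<omega>)) \<partial>M)
      = ennreal (\<Prod>i\<in>UNIV. 1 / sqrt (1 - 2 * l * (\<sigma> i (r k))\<^sup>2))"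
  proof -
    have "\<forall>\<^sub>F k in sequentially. 2 * l * (\<sigma> i (r k))\<^sup>2 < 1" for i
      using filterlim_compose[OF \<sigma>_lim r] l unfolding s_def[symmetric]
      by (intro order_tendstoD(2)) (auto intro!: tendsto_intros)
    then have "\<forall>\<^sub>F k in sequentially. \<forall>i. 2 * l * (\<sigma> i (r k))\<^sup>2 < 1"
      by (rule eventually_all_finite)
    then show ?thesis
      unfolding Q_def Sg_def Sf_def \<sigma>_def
      by eventually_elim (intro nn_integral_exp_sum_square_stepint_diff W ind G(2) F(2), auto)
  qed
  moreover have "(\<lambda>k. \<Prod>i\<in>UNIV. 1 / sqrt (1 - 2 * l * (\<sigma> i (r k))\<^sup>2))
      \<longlonglongrightarrow> (\<Prod>i\<in>(UNIV::'d set). 1 / sqrt (1 - 2 * l * s\<^sup>2))"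
    using l filterlim_compose[OF \<sigma>_lim r] unfolding s_def[symmetric]
    by (intro tendsto_intros) auto
  ultimately have "(\<integral>\<^sup>+\<omega>. ennreal (exp (l * (\<Sum>i\<in>UNIV. (Yg i \<omega> - Yf i \<omega>)\<^sup>2))) \<partial>M)
      \<le> ennreal (\<Prod>i\<in>(UNIV::'d set). 1 / sqrt (1 - 2 * l * s\<^sup>2))"
    by (rule nn_integral_exp_le_of_AE_tendsto[OF Q_meas])
  then show ?thesis unfolding s_def by simp
qed

lemma norm_vec_power2: "(norm (v :: real ^ 'n))\<^sup>2 = (\<Sum>i\<in>UNIV. (v $ i)\<^sup>2)"
  unfolding norm_vec_def L2_set_def by (simp add: sum_nonneg)

lemma (in prob_space) nn_integral_exp_norm_square_wiener_le:
  fixes W :: "'d::finite \<Rightarrow> 'a \<Rightarrow> real \<Rightarrow> real" and A :: "(real \<Rightarrow> real) \<Rightarrow> 'a \<Rightarrow> real ^ 'd"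
  assumes W: "\<And>i. std_wiener M (W i)"
    and ind: "indep_vars (\<lambda>_. Pi\<^sub>M {0..1} (\<lambda>_. borel)) (\<lambda>i \<omega>. restrict (W i \<omega>) {0..1}) UNIV"
    and A: "\<And>f i. in_L2 f \<Longrightarrow> wiener_integral M (W i) f (\<lambda>\<omega>. A f \<omega> $ i)"
    and g: "in_L2 g" and f: "in_L2 f"
    and l: "2 * l * (L2norm (\<lambda>t. g t - f t))\<^sup>2 < 1"
  shows "(\<integral>\<^sup>+\<omega>. ennreal (exp (l * (norm (A g \<omega> - A f \<omega>))\<^sup>2)) \<partial>M)
       \<le> ennreal ((1 / sqrt (1 - 2 * l * (L2norm (\<lambda>t. g t - f t))\<^sup>2)) ^ CARD('d))"
  using nn_integral_exp_sum_square_wiener_diff_le[OF W ind A[OF g] A[OF f] g f l]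
  by (simp add: norm_vec_power2)

lemma wiener_integral_measurable:
  "wiener_integral M X f Y \<Longrightarrow> Y \<in> borel_measurable M"
  unfolding wiener_integral_def by blast

section \<open>Chernoff bounds for scaled \<open>\<chi>\<^sup>2\<close> variables\<close>

lemma emeasure_ge_le_exp_nn_integral:
  assumes "Q \<in> borel_measurable M" "0 < c"
  shows "emeasure M {x\<in>space M. a \<le> Q x}
           \<le> ennreal (exp (- c * a)) * (\<integral>\<^sup>+x. ennreal (exp (c * Q x)) \<partial>M)"
proof -
  have "(\<integral>\<^sup>+x. ennreal (exp (c * Q x)) * indicator (space M) x \<partial>M) = (\<integral>\<^sup>+x. ennreal (exp (c * Q x)) \<partial>M)"
    by (intro nn_integral_cong) simp
  then show ?thesis using Chernoff_ineq_nn_integral_ge[of c "space M" M Q a] assms by simp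
qed

lemma emeasure_le_le_exp_nn_integral:
  assumes "Q \<in> borel_measurable M" "0 < c"
  shows "emeasure M {x\<in>space M. Q x \<le> a}
           \<le> ennreal (exp (c * a)) * (\<integral>\<^sup>+x. ennreal (exp (- c * Q x)) \<partial>M)"
  using emeasure_ge_le_exp_nn_integral[of "\<lambda>x. - Q x" M c "- a"] assms by simp

lemma sqrt_power_eq_exp_ln: "0 < x \<Longrightarrow> sqrt x ^ d = exp (real d / 2 * ln x)"
  by (simp add: powr_half_sqrt[symmetric] powr_def exp_of_nat_mult[symmetric] field_simps)

context prob_space
begin

lemma chi_square_lower_tail:
  assumes Q: "Q \<in> borel_measurable M" and s: "0 < s" and \<tau>: "0 < \<tau>" "\<tau> < 1"
    and mgf: "\<And>c. 2 * c * s\<^sup>2 < 1 \<Longrightarrow>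
                (\<integral>\<^sup>+\<omega>. ennreal (exp (c * Q \<omega>)) \<partial>M) \<le> ennreal ((1 / sqrt (1 - 2 * c * s\<^sup>2)) ^ d)"
  shows "prob {\<omega>\<in>space M. Q \<omega> \<le> (1 - \<tau>) * d * s\<^sup>2} \<le> exp (d / 2 * (\<tau> + ln (1 - \<tau>)))"
proof -
  \<comment> \<open>the optimal Chernoff parameter\<close>
  define c where "c = \<tau> / (2 * (1 - \<tau>) * s\<^sup>2)"
  have c: "0 < c" using s \<tau> unfolding c_def by simp
  have "emeasure M {\<omega>\<in>space M. Q \<omega> \<le> (1 - \<tau>) * d * s\<^sup>2}
      \<le> ennreal (exp (c * ((1 - \<tau>) * d * s\<^sup>2))) * (\<integral>\<^sup>+\<omega>. ennreal (exp (- c * Q \<omega>)) \<partial>M)"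
    by (rule emeasure_le_le_exp_nn_integral[OF Q c])
  also have "\<dots> \<le> ennreal (exp (c * ((1 - \<tau>) * d * s\<^sup>2))) * ennreal ((1 / sqrt (1 - 2 * (- c) * s\<^sup>2)) ^ d)"
  proof (intro mult_left_mono mgf)
    have "0 \<le> c * s\<^sup>2" using c by simp
    then show "2 * - c * s\<^sup>2 < 1" by simp
  qed simp
  also have "\<dots> = ennreal (exp (d / 2 * (\<tau> + ln (1 - \<tau>))))"
  proof -
    have "1 - 2 * (- c) * s\<^sup>2 = 1 / (1 - \<tau>)" "c * ((1 - \<tau>) * d * s\<^sup>2) = d / 2 * \<tau>"
      using s \<tau> unfolding c_def by (simp_all add: field_simps)
    then show ?thesis
      using \<tau> by (simp add: real_sqrt_divide sqrt_power_eq_exp_ln mult_exp_exp ring_distribs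
                   flip: ennreal_mult)
  qed
  finally show ?thesis by (simp add: emeasure_eq_measure)
qed

lemma prob_pos_le_exp_of_mgf_le_one:
  assumes Q: "Q \<in> borel_measurable M" and mgf: "\<And>c. (\<integral>\<^sup>+\<omega>. ennreal (exp (c * Q \<omega>)) \<partial>M) \<le> 1"
    and b: "0 < b"
  shows "prob {\<omega>\<in>space M. 0 < Q \<omega>} \<le> exp (- b)"
proof -
  \<comment> \<open>Chernoff with the parameter \<open>b (n+1)\<close> bounds each \<open>{Q \<ge> 1/(n+1)}\<close> by \<open>exp (-b)\<close>\<close>
  define A where "A = (\<lambda>n::nat. {\<omega>\<in>space M. 1 / Suc n \<le> Q \<omega>})"
  have "prob (A n) \<le> exp (- b)" for n
  proof -
    have "emeasure M (A n) \<le> ennreal (exp (- (b * Suc n) * (1 / Suc n))) * (\<integral>\<^sup>+\<omega>. ennreal (exp (b * Suc n * Q \<omega>)) \<partial>M)"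
      unfolding A_def using b by (intro emeasure_ge_le_exp_nn_integral Q) simp
    also have "\<dots> \<le> ennreal (exp (- b)) * 1"
      using mgf by (intro mult_mono) simp_all
    finally show ?thesis by (simp add: emeasure_eq_measure)
  qed
  moreover have "(\<lambda>n. prob (A n)) \<longlonglongrightarrow> prob (\<Union>n. A n)"
    using Q by (intro finite_Lim_measure_incseq incseq_SucI)
      (auto simp: A_def frac_le elim!: order_trans[rotated])
  ultimately have "prob (\<Union>n. A n) \<le> exp (- b)" by (intro LIMSEQ_le_const2) auto
  moreover have "{\<omega>\<in>space M. 0 < Q \<omega>} = (\<Union>n. A n)"
  proof (intro equalityI subsetI)
    fix \<omega> assume \<omega>: "\<omega> \<in> {\<omega>\<in>space M. 0 < Q \<omega>}"
    then obtain n where "inverse (real (Suc n)) < Q \<omega>" using reals_Archimedean by auto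
    with \<omega> show "\<omega> \<in> (\<Union>n. A n)" unfolding A_def by (auto simp: inverse_eq_divide intro!: less_imp_le)
  qed (auto simp: A_def elim: less_le_trans[rotated])
  ultimately show ?thesis by simp
qed

lemma chi_square_upper_tail:
  assumes Q: "Q \<in> borel_measurable M" and s: "0 \<le> s" "s \<le> \<delta>" and \<tau>: "0 < \<tau>" and d: "0 < d"
    and mgf: "\<And>c. 2 * c * s\<^sup>2 < 1 \<Longrightarrow>
                (\<integral>\<^sup>+\<omega>. ennreal (exp (c * Q \<omega>)) \<partial>M) \<le> ennreal ((1 / sqrt (1 - 2 * c * s\<^sup>2)) ^ d)"
  shows "prob {\<omega>\<in>space M. (1 + \<tau>) * d * \<delta>\<^sup>2 < Q \<omega>} \<le> exp (- (d / 2) * (\<tau> - ln (1 + \<tau>)))"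
proof (cases "\<delta> = 0")
  case True
  then have "prob {\<omega>\<in>space M. 0 < Q \<omega>} \<le> exp (- (d / 2 * (\<tau> - ln (1 + \<tau>))))"
    using mgf s ln_add_one_self_less_self[OF \<tau>] d by (intro prob_pos_le_exp_of_mgf_le_one Q) auto
  then show ?thesis using True by simp
next
  case False
  then have \<delta>: "0 < \<delta>" using s by simp
  \<comment> \<open>the Chernoff parameter that is optimal for variance \<open>\<delta>\<^sup>2\<close>; a smaller variance only helps\<close>
  define K where "K = (1 + \<tau>) * \<delta>\<^sup>2"
  have K: "0 < K" using \<delta> \<tau> unfolding K_def by simp
  define c where "c = \<tau> / (2 * K)"
  have c: "0 < c" using K \<tau> unfolding c_def by simp
  have cK: "2 * c * K = \<tau>" using K unfolding c_def by simp
  then have "(1 - 2 * c * \<delta>\<^sup>2) * (1 + \<tau>) = 1" unfolding K_def by (simp add: algebra_simps)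
  then have c\<delta>: "1 - 2 * c * \<delta>\<^sup>2 = 1 / (1 + \<tau>)" using \<tau> by (simp add: eq_divide_eq)
  have "2 * c * s\<^sup>2 \<le> 2 * c * \<delta>\<^sup>2" using s c by (simp add: power_mono)
  moreover have "0 < 1 - 2 * c * \<delta>\<^sup>2" using c\<delta> \<tau> by simp
  ultimately have cs: "2 * c * s\<^sup>2 < 1" and
    mono: "(1 / sqrt (1 - 2 * c * s\<^sup>2)) ^ d \<le> (1 / sqrt (1 - 2 * c * \<delta>\<^sup>2)) ^ d"
    by (auto intro!: power_mono frac_le)
  have "emeasure M {\<omega>\<in>space M. (1 + \<tau>) * d * \<delta>\<^sup>2 \<le> Q \<omega>}
      \<le> ennreal (exp (- c * ((1 + \<tau>) * d * \<delta>\<^sup>2))) * (\<integral>\<^sup>+\<omega>. ennreal (exp (c * Q \<omega>)) \<partial>M)"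
    by (rule emeasure_ge_le_exp_nn_integral[OF Q c])
  also have "\<dots> \<le> ennreal (exp (- c * ((1 + \<tau>) * d * \<delta>\<^sup>2))) * ennreal ((1 / sqrt (1 - 2 * c * \<delta>\<^sup>2)) ^ d)"
    using mgf[OF cs] mono by (intro mult_left_mono) (auto intro: order_trans ennreal_leI)
  also have "\<dots> = ennreal (exp (- (d / 2) * (\<tau> - ln (1 + \<tau>))))"
  proof -
    have "c * ((1 + \<tau>) * d * \<delta>\<^sup>2) = d / 2 * (2 * c * K)"
      unfolding K_def by (simp add: algebra_simps)
    then have "- c * ((1 + \<tau>) * d * \<delta>\<^sup>2) = - (d / 2 * \<tau>)" unfolding cK by simp
    then show ?thesis
      using \<tau> by (simp add: c\<delta> real_sqrt_divide sqrt_power_eq_exp_ln mult_exp_exp ring_distribs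
                   flip: ennreal_mult)
  qed
  finally have "prob {\<omega>\<in>space M. (1 + \<tau>) * d * \<delta>\<^sup>2 \<le> Q \<omega>} \<le> exp (- (d / 2) * (\<tau> - ln (1 + \<tau>)))"
    by (simp add: emeasure_eq_measure)
  moreover have "prob {\<omega>\<in>space M. (1 + \<tau>) * d * \<delta>\<^sup>2 < Q \<omega>}
      \<le> prob {\<omega>\<in>space M. (1 + \<tau>) * d * \<delta>\<^sup>2 \<le> Q \<omega>}"
    using Q by (intro finite_measure_mono) auto
  ultimately show ?thesis by linarith
qed

end

lemma (in prob_space) prob_UNION_le_card_mult:
  fixes p :: real
  assumes "finite I" "\<And>i. i \<in> I \<Longrightarrow> A i \<in> sets M" "\<And>i. i \<in> I \<Longrightarrow> prob (A i) \<le> p"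
  shows "prob (\<Union>i\<in>I. A i) \<le> card I * p"
proof -
  have "prob (\<Union>i\<in>I. A i) \<le> (\<Sum>i\<in>I. prob (A i))"
    using assms(1,2) by (rule measure_UNION_le)
  also have "\<dots> \<le> card I * p"
    using sum_mono[of I "\<lambda>i. prob (A i)" "\<lambda>_. p"] assms(3) by simp
  finally show ?thesis .
qed

lemma (in prob_space) chi_square_union_bound:
  fixes Q :: "'c \<Rightarrow> 'a \<Rightarrow> real" and s :: "'c \<Rightarrow> real" and \<delta> \<tau>\<^sub>1 \<tau>\<^sub>2 :: real and d :: nat
  assumes C: "finite C" "card C \<le> 2 ^ r" "g\<^sub>0 \<in> C"
    and Q: "\<And>g. g \<in> C \<Longrightarrow> Q g \<in> borel_measurable M" "\<And>g \<omega>. 0 \<le> Q g \<omega>"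
    and s: "\<And>g. 0 \<le> s g" "s g\<^sub>0 \<le> \<delta>"
    and \<tau>: "0 < \<tau>\<^sub>1" "0 < \<tau>\<^sub>2" "\<tau>\<^sub>2 < 1" and d: "0 < d"
    and mgf: "\<And>g c. g \<in> C \<Longrightarrow> 2 * c * (s g)\<^sup>2 < 1 \<Longrightarrow>
                (\<integral>\<^sup>+\<omega>. ennreal (exp (c * Q g \<omega>)) \<partial>M) \<le> ennreal ((1 / sqrt (1 - 2 * c * (s g)\<^sup>2)) ^ d)"
  shows "\<exists>S\<in>sets M.
           prob S > 1 - 2 ^ r * exp (d / 2 * (\<tau>\<^sub>2 + ln (1 - \<tau>\<^sub>2))) - exp (- (d / 2) * (\<tau>\<^sub>1 - ln (1 + \<tau>\<^sub>1)))
         \<and> (\<forall>\<omega>\<in>S. Q g\<^sub>0 \<omega> \<le> (1 + \<tau>\<^sub>1) * d * \<delta>\<^sup>2 \<and> (\<forall>g\<in>C - {g\<^sub>0}. (1 - \<tau>\<^sub>2) * d * (s g)\<^sup>2 \<le> Q g \<omega>))"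
proof -
  define p\<^sub>1 where "p\<^sub>1 = exp (d / 2 * (\<tau>\<^sub>2 + ln (1 - \<tau>\<^sub>2)))"
  define p\<^sub>2 where "p\<^sub>2 = exp (- (d / 2) * (\<tau>\<^sub>1 - ln (1 + \<tau>\<^sub>1)))"
  define B\<^sub>0 where "B\<^sub>0 = {\<omega>\<in>space M. (1 + \<tau>\<^sub>1) * d * \<delta>\<^sup>2 < Q g\<^sub>0 \<omega>}"
  define B where "B = (\<lambda>g. {\<omega>\<in>space M. Q g \<omega> < (1 - \<tau>\<^sub>2) * d * (s g)\<^sup>2})"
  define Bad where "Bad = B\<^sub>0 \<union> (\<Union>g\<in>C - {g\<^sub>0}. B g)"
  have B\<^sub>0_sets: "B\<^sub>0 \<in> sets M" unfolding B\<^sub>0_def using Q(1)[OF C(3)] by measurable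
  have B_sets: "B g \<in> sets M" if "g \<in> C" for g unfolding B_def using Q(1)[OF that] by measurable
  have B\<^sub>0_bound: "prob B\<^sub>0 \<le> p\<^sub>2"
    unfolding B\<^sub>0_def p\<^sub>2_def using s mgf[OF C(3)] by (intro chi_square_upper_tail Q(1) C(3) \<tau> d) auto
  have B_bound: "prob (B g) \<le> p\<^sub>1" if g: "g \<in> C" for g
  proof (cases "s g = 0")
    case True
    then have "B g = {}" unfolding B_def using Q(2) by (auto simp: not_less)
    then show ?thesis unfolding p\<^sub>1_def by simp
  next
    case False
    then have "0 < s g" using s(1)[of g] by simp
    then have "prob {\<omega>\<in>space M. Q g \<omega> \<le> (1 - \<tau>\<^sub>2) * d * (s g)\<^sup>2} \<le> p\<^sub>1"
      unfolding p\<^sub>1_def using mgf[OF g] by (intro chi_square_lower_tail Q(1) g \<tau>)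
    moreover have "prob (B g) \<le> prob {\<omega>\<in>space M. Q g \<omega> \<le> (1 - \<tau>\<^sub>2) * d * (s g)\<^sup>2}"
      using Q(1)[OF g] unfolding B_def by (intro finite_measure_mono) auto
    ultimately show ?thesis by linarith
  qed
  have "card (C - {g\<^sub>0}) + 1 = card C"
    using C card_Diff_singleton[OF C(3)] card_gt_0_iff[of C] by auto
  then have "real (card (C - {g\<^sub>0}) + 1) \<le> real (2 ^ r)" using C(2) by (simp only: of_nat_le_iff)
  then have card: "real (card (C - {g\<^sub>0})) \<le> 2 ^ r - 1" by simp
  have "prob (\<Union>g\<in>C - {g\<^sub>0}. B g) \<le> card (C - {g\<^sub>0}) * p\<^sub>1"
    by (rule prob_UNION_le_card_mult) (use C B_sets B_bound in auto)
  also have "\<dots> \<le> (2 ^ r - 1) * p\<^sub>1"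
    using card unfolding p\<^sub>1_def by (intro mult_right_mono) auto
  finally have "prob (\<Union>g\<in>C - {g\<^sub>0}. B g) \<le> (2 ^ r - 1) * p\<^sub>1" .
  moreover have "prob Bad \<le> prob B\<^sub>0 + prob (\<Union>g\<in>C - {g\<^sub>0}. B g)"
    unfolding Bad_def using B\<^sub>0_sets B_sets C by (intro measure_Un_le) auto
  ultimately have "prob Bad \<le> p\<^sub>2 + (2 ^ r - 1) * p\<^sub>1" using B\<^sub>0_bound by linarith
  moreover have Bad_sets: "Bad \<in> sets M" using B\<^sub>0_sets B_sets C unfolding Bad_def by auto
  moreover have "(2 ^ r - 1) * p\<^sub>1 = 2 ^ r * p\<^sub>1 - p\<^sub>1" by (simp add: algebra_simps)
  moreover have "0 < p\<^sub>1" unfolding p\<^sub>1_def by simp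
  ultimately have "1 - 2 ^ r * p\<^sub>1 - p\<^sub>2 < prob (space M - Bad)"
    using prob_compl[OF Bad_sets] by linarith
  moreover have "space M - Bad \<in> sets M" using Bad_sets by auto
  moreover have "Q g\<^sub>0 \<omega> \<le> (1 + \<tau>\<^sub>1) * d * \<delta>\<^sup>2 \<and> (\<forall>g\<in>C - {g\<^sub>0}. (1 - \<tau>\<^sub>2) * d * (s g)\<^sup>2 \<le> Q g \<omega>)"
    if "\<omega> \<in> space M - Bad" for \<omega>
    using that unfolding Bad_def B\<^sub>0_def B_def by (auto simp: not_less)
  ultimately show ?thesis unfolding p\<^sub>1_def p\<^sub>2_def by blast
qed

section \<open>Least-squares decoding\<close>

lemma dist_le_of_nearest:
  fixes u v v\<^sub>0 y :: "'a::metric_space"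
  assumes "dist y v \<le> dist y v\<^sub>0" "dist y u \<le> \<zeta>"
  shows "dist v u \<le> dist v\<^sub>0 u + 2 * \<zeta>"
  using assms dist_triangle[of v u y] dist_triangle[of y v\<^sub>0 u] dist_commute[of y v] dist_commute[of v\<^sub>0 y]
    dist_triangle[of v\<^sub>0 y u] dist_commute[of u y]
  by linarith

lemma nearest_codeword_error:
  fixes V :: "'c \<Rightarrow> 'v::real_normed_vector" and s :: "'c \<Rightarrow> real" and \<delta> \<zeta> \<tau>\<^sub>1 \<tau>\<^sub>2 d :: real
  assumes C: "fhat \<in> C" "g\<^sub>0 \<in> C"
    and nearest: "\<forall>g\<in>C. (norm (y - V fhat))\<^sup>2 \<le> (norm (y - V g))\<^sup>2" and noise: "norm (y - u) \<le> \<zeta>"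
    and g\<^sub>0: "(norm (V g\<^sub>0 - u))\<^sup>2 \<le> (1 + \<tau>\<^sub>1) * d * \<delta>\<^sup>2" "s g\<^sub>0 \<le> \<delta>"
    and others: "\<forall>g\<in>C - {g\<^sub>0}. (1 - \<tau>\<^sub>2) * d * (s g)\<^sup>2 \<le> (norm (V g - u))\<^sup>2"
    and s: "\<And>g. 0 \<le> s g" and \<tau>: "0 < \<tau>\<^sub>1" "0 < \<tau>\<^sub>2" "\<tau>\<^sub>2 < 1" and d: "0 < d"
  shows "s fhat \<le> \<delta> * sqrt ((1 + \<tau>\<^sub>1) / (1 - \<tau>\<^sub>2)) + 2 * \<zeta> / sqrt ((1 - \<tau>\<^sub>2) * d)"
proof -
  have \<zeta>: "0 \<le> \<zeta>" using noise norm_ge_zero order_trans by blast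
  have \<delta>: "0 \<le> \<delta>" using s[of g\<^sub>0] g\<^sub>0(2) by simp
  have ratio: "1 \<le> sqrt ((1 + \<tau>\<^sub>1) / (1 - \<tau>\<^sub>2))" using \<tau> by simp
  show ?thesis
  proof (cases "fhat = g\<^sub>0")
    case True
    have "s fhat \<le> \<delta> * sqrt ((1 + \<tau>\<^sub>1) / (1 - \<tau>\<^sub>2))"
      using True g\<^sub>0(2) mult_left_mono[OF ratio \<delta>] by simp
    moreover have "0 \<le> 2 * \<zeta> / sqrt ((1 - \<tau>\<^sub>2) * d)" using \<zeta> \<tau> d by (intro divide_nonneg_nonneg) auto
    ultimately show ?thesis by linarith
  next
    case False
    have "norm (y - V fhat) \<le> norm (y - V g\<^sub>0)"
      using nearest C(2) by (auto intro: power2_le_imp_le)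
    then have "norm (V fhat - u) \<le> norm (V g\<^sub>0 - u) + 2 * \<zeta>"
      using dist_le_of_nearest[of y "V fhat" "V g\<^sub>0" u \<zeta>] noise by (simp add: dist_norm)
    also have "norm (V g\<^sub>0 - u) \<le> sqrt ((1 + \<tau>\<^sub>1) * d) * \<delta>"
      using real_sqrt_le_mono[OF g\<^sub>0(1)] \<delta> by (simp add: real_sqrt_mult)
    finally have "norm (V fhat - u) \<le> sqrt ((1 + \<tau>\<^sub>1) * d) * \<delta> + 2 * \<zeta>" by simp
    moreover have "sqrt ((1 - \<tau>\<^sub>2) * d) * s fhat \<le> norm (V fhat - u)"
      using real_sqrt_le_mono[OF others[rule_format, of fhat]] C(1) False s[of fhat]
      by (simp add: real_sqrt_mult)
    ultimately have "s fhat \<le> (sqrt ((1 + \<tau>\<^sub>1) * d) * \<delta> + 2 * \<zeta>) / sqrt ((1 - \<tau>\<^sub>2) * d)"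
      using \<tau> d by (simp add: pos_le_divide_eq mult.commute)
    also have "\<dots> = \<delta> * (sqrt ((1 + \<tau>\<^sub>1) * d) / sqrt ((1 - \<tau>\<^sub>2) * d)) + 2 * \<zeta> / sqrt ((1 - \<tau>\<^sub>2) * d)"
      by (simp add: add_divide_distrib)
    also have "sqrt ((1 + \<tau>\<^sub>1) * d) / sqrt ((1 - \<tau>\<^sub>2) * d) = sqrt ((1 + \<tau>\<^sub>1) / (1 - \<tau>\<^sub>2))"
      using d by (simp add: real_sqrt_divide[symmetric])
    finally show ?thesis .
  qed
qed

lemma codebook_subset_image:
  assumes "compression_code F r E D"
  shows "codebook F E D \<subseteq> D ` {1..2 ^ r}"
  using assms unfolding compression_code_def codebook_def by auto

lemma in_L2_codeword:
  assumes "compression_code F r E D" "g \<in> codebook F E D"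
  shows "in_L2 g"
  using assms unfolding compression_code_def codebook_def by auto

lemma card_codebook_le:
  assumes "compression_code F r E D"
  shows "card (codebook F E D) \<le> 2 ^ r"
  using card_mono[OF _ codebook_subset_image[OF assms]] card_image_le[of "{1..2 ^ r}" D] by simp

lemma L2norm_codeword_le_distortion:
  assumes "f \<in> F" "distortion F E D = ereal \<delta>"
  shows "L2norm (\<lambda>t. D (E f) t - f t) \<le> \<delta>"
proof -
  have "ereal (L2norm (\<lambda>t. f t - D (E f) t)) \<le> distortion F E D"
    unfolding distortion_def using assms(1) by (rule SUP_upper)
  then show ?thesis using assms(2) by (simp add: L2norm_minus_commute)
qed

lemma (in prob_space) codebook_measurement_concentration:
  fixes W :: "'d::finite \<Rightarrow> 'a \<Rightarrow> real \<Rightarrow> real" and A :: "(real \<Rightarrow> real) \<Rightarrow> 'a \<Rightarrow> real ^ 'd"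
  assumes W: "\<And>i. std_wiener M (W i)"
    and ind: "indep_vars (\<lambda>_. Pi\<^sub>M {0..1} (\<lambda>_. borel)) (\<lambda>i \<omega>. restrict (W i \<omega>) {0..1}) UNIV"
    and A: "\<And>f i. in_L2 f \<Longrightarrow> wiener_integral M (W i) f (\<lambda>\<omega>. A f \<omega> $ i)"
    and code: "compression_code F r E D" and f\<^sub>o: "in_L2 f\<^sub>o" "f\<^sub>o \<in> F"
    and \<delta>: "L2norm (\<lambda>t. D (E f\<^sub>o) t - f\<^sub>o t) \<le> \<delta>"
    and \<tau>: "0 < \<tau>\<^sub>1" "0 < \<tau>\<^sub>2" "\<tau>\<^sub>2 < 1"
  shows "\<exists>S\<in>sets M.
           prob S > 1 - 2 ^ r * exp (real CARD('d) / 2 * (\<tau>\<^sub>2 + ln (1 - \<tau>\<^sub>2)))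
                      - exp (- (real CARD('d) / 2) * (\<tau>\<^sub>1 - ln (1 + \<tau>\<^sub>1)))
         \<and> (\<forall>\<omega>\<in>S. (norm (A (D (E f\<^sub>o)) \<omega> - A f\<^sub>o \<omega>))\<^sup>2 \<le> (1 + \<tau>\<^sub>1) * CARD('d) * \<delta>\<^sup>2
              \<and> (\<forall>g\<in>codebook F E D - {D (E f\<^sub>o)}.
                   (1 - \<tau>\<^sub>2) * CARD('d) * (L2norm (\<lambda>t. g t - f\<^sub>o t))\<^sup>2 \<le> (norm (A g \<omega> - A f\<^sub>o \<omega>))\<^sup>2))"
proof -
  define C where "C = codebook F E D"
  define Q where "Q = (\<lambda>g \<omega>. (norm (A g \<omega> - A f\<^sub>o \<omega>))\<^sup>2)"
  define s where "s = (\<lambda>g. L2norm (\<lambda>t. g t - f\<^sub>o t))"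
  have C: "finite C" "card C \<le> 2 ^ r" "D (E f\<^sub>o) \<in> C" "\<And>g. g \<in> C \<Longrightarrow> in_L2 g"
    using finite_subset[OF codebook_subset_image[OF code]] card_codebook_le[OF code]
      in_L2_codeword[OF code] f\<^sub>o(2)
    unfolding C_def codebook_def by blast+
  have A_meas: "(\<lambda>\<omega>. A g \<omega> $ i) \<in> borel_measurable M" if "in_L2 g" for g i
    using A[OF that] by (rule wiener_integral_measurable)
  have "Q g \<in> borel_measurable M" if "g \<in> C" for g
    using A_meas[OF C(4)[OF that]] A_meas[OF f\<^sub>o(1)]
    unfolding Q_def norm_vec_power2 vector_minus_component by measurable
  moreover have "(\<integral>\<^sup>+\<omega>. ennreal (exp (c * Q g \<omega>)) \<partial>M) \<le> ennreal ((1 / sqrt (1 - 2 * c * (s g)\<^sup>2)) ^ CARD('d))"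
    if "g \<in> C" "2 * c * (s g)\<^sup>2 < 1" for g c
    using W ind A C(4)[OF that(1)] f\<^sub>o(1) that(2) unfolding Q_def s_def
    by (intro nn_integral_exp_norm_square_wiener_le) auto
  ultimately show ?thesis
    using chi_square_union_bound[OF C(1-3), of Q s \<delta> \<tau>\<^sub>1 \<tau>\<^sub>2 "CARD('d)"] \<delta> \<tau>
    unfolding C_def Q_def s_def by (auto simp: L2norm_nonneg)
qed

theorem theorem11:
  fixes M :: "'a measure"
    and W :: "'d::finite \<Rightarrow> 'a \<Rightarrow> real \<Rightarrow> real"
    and A :: "(real \<Rightarrow> real) \<Rightarrow> 'a \<Rightarrow> real ^ 'd"
    and F :: "(real \<Rightarrow> real) set"
    and r :: nat
    and E :: "(real \<Rightarrow> real) \<Rightarrow> nat"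
    and D :: "nat \<Rightarrow> (real \<Rightarrow> real)"
    and \<delta> \<zeta> \<tau>\<^sub>1 \<tau>\<^sub>2 :: real
    and f\<^sub>o :: "real \<Rightarrow> real"
    and z :: "'a \<Rightarrow> real ^ 'd"
  assumes "prob_space M"
    and "\<forall>i. std_wiener M (W i)"
    and "prob_space.indep_vars M (\<lambda>_. Pi\<^sub>M {0..1} (\<lambda>_. borel))
           (\<lambda>i \<omega>. restrict (W i \<omega>) {0..1}) UNIV"
    and "\<forall>f. in_L2 f \<longrightarrow> (\<forall>i. wiener_integral M (W i) f (\<lambda>\<omega>. A f \<omega> $ i))"
    and "\<forall>f\<in>F. in_L2 f"
    and "compression_code F r E D"
    and "distortion F E D = ereal \<delta>"
    and "f\<^sub>o \<in> F"
    and "\<forall>\<omega>. norm (z \<omega>) \<le> \<zeta>"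
    and "\<tau>\<^sub>1 > 0" and "0 < \<tau>\<^sub>2" and "\<tau>\<^sub>2 < 1"
  shows "\<exists>S\<in>sets M.
     measure M S > 1 - 2 ^ r * exp (real CARD('d) / 2 * (\<tau>\<^sub>2 + ln (1 - \<tau>\<^sub>2)))
                     - exp (- (real CARD('d) / 2) * (\<tau>\<^sub>1 - ln (1 + \<tau>\<^sub>1)))
   \<and> (\<forall>\<omega>\<in>S. \<forall>fhat.
        (fhat \<in> codebook F E D \<and>
         (\<forall>g\<in>codebook F E D.
            (norm (A f\<^sub>o \<omega> + z \<omega> - A fhat \<omega>))\<^sup>2 \<le> (norm (A f\<^sub>o \<omega> + z \<omega> - A g \<omega>))\<^sup>2))
        \<longrightarrow> L2norm (\<lambda>t. fhat t - f\<^sub>o t)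
              \<le> \<delta> * sqrt ((1 + \<tau>\<^sub>1) / (1 - \<tau>\<^sub>2))
                 + 2 * \<zeta> / sqrt ((1 - \<tau>\<^sub>2) * real CARD('d)))"
proof -
  interpret prob_space M by fact
  have f\<^sub>o: "in_L2 f\<^sub>o" using assms(5,8) by blast
  have \<delta>: "L2norm (\<lambda>t. D (E f\<^sub>o) t - f\<^sub>o t) \<le> \<delta>"
    using L2norm_codeword_le_distortion[OF assms(8,7)] .
  obtain S where S: "S \<in> sets M"
    and prob_S: "prob S > 1 - 2 ^ r * exp (real CARD('d) / 2 * (\<tau>\<^sub>2 + ln (1 - \<tau>\<^sub>2)))
                             - exp (- (real CARD('d) / 2) * (\<tau>\<^sub>1 - ln (1 + \<tau>\<^sub>1)))"
    and good: "\<forall>\<omega>\<in>S. (norm (A (D (E f\<^sub>o)) \<omega> - A f\<^sub>o \<omega>))\<^sup>2 \<le> (1 + \<tau>\<^sub>1) * CARD('d) * \<delta>\<^sup>2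
              \<and> (\<forall>g\<in>codebook F E D - {D (E f\<^sub>o)}.
                   (1 - \<tau>\<^sub>2) * CARD('d) * (L2norm (\<lambda>t. g t - f\<^sub>o t))\<^sup>2 \<le> (norm (A g \<omega> - A f\<^sub>o \<omega>))\<^sup>2)"
    using codebook_measurement_concentration[OF assms(2)[rule_format] assms(3) assms(4)[rule_format]
        assms(6) f\<^sub>o assms(8) \<delta> assms(10-12)]
    by blast
  have g\<^sub>0: "D (E f\<^sub>o) \<in> codebook F E D" using assms(8) unfolding codebook_def by blast
  show ?thesis
  proof (intro bexI[OF _ S] conjI ballI allI impI)
    fix \<omega> fhat assume \<omega>: "\<omega> \<in> S"
      and fhat: "fhat \<in> codebook F E D \<and> (\<forall>g\<in>codebook F E D.
         (norm (A f\<^sub>o \<omega> + z \<omega> - A fhat \<omega>))\<^sup>2 \<le> (norm (A f\<^sub>o \<omega> + z \<omega> - A g \<omega>))\<^sup>2)"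
    show "L2norm (\<lambda>t. fhat t - f\<^sub>o t)
        \<le> \<delta> * sqrt ((1 + \<tau>\<^sub>1) / (1 - \<tau>\<^sub>2)) + 2 * \<zeta> / sqrt ((1 - \<tau>\<^sub>2) * real CARD('d))"
      by (rule nearest_codeword_error[where y = "A f\<^sub>o \<omega> + z \<omega>" and V = "\<lambda>g. A g \<omega>"
            and u = "A f\<^sub>o \<omega>" and s = "\<lambda>g. L2norm (\<lambda>t. g t - f\<^sub>o t)" and C = "codebook F E D"])
        (use \<omega> fhat good g\<^sub>0 \<delta> assms(9-12) in \<open>auto simp: L2norm_nonneg\<close>)
  qed (fact prob_S)
qed

end
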